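(* Let $1\le d\le n$. Let $C_n(d)$ be the complex vector space spanned by symbols $\tilde f_I^{(r)}$ ($I\in[n]^d$, $r=0,1,2,\dots$), modulo the alternating relations. These are the coefficients of $\tilde f_{\sigma I}(u)=\operatorname{sgn}(\sigma)\tilde f_I(u)$ for all $I\in[n]^d$ and $\sigma\in\mathfrak S_d$, where $\tilde f_I(u)=\sum_{r\ge0}\tilde f^{(r)}_Iu^{-r}$. Then $C_n(d)$ is a right $Y_n$-comodule with structure map $$\rho(\tilde f_I(u))=\sum_{J\in\binom{[n]}d}\tilde f_J(u)\otimes t^J_I(u)\qquad(I\in[n]^d),$$ i.e. $\rho(\tilde f^{(r)}_I)$ is the coefficient of $u^{-r}$ on the right, with $J$ listed increasingly.
   Context: $Y_n$ is the Yangian: the complex associative unital algebra with generators $t^{(r)}_{ij}$ ($1\le i,j\le n$, $r\ge1$) and relations $[t_{ij}^{(r+1)},t_{kl}^{(s)}]-[t_{ij}^{(r)},t_{kl}^{(s+1)}]=t_{kj}^{(r)}t_{il}^{(s)}-t_{kj}^{(s)}t_{il}^{(r)}$ ($r,s\ge0$, $t^{(0)}_{ij}=\delta_{ij}$). Put $t_{ij}(u)=\delta_{ij}+\sum_{r\ge1}t^{(r)}_{ij}u^{-r}$. $Y_n$ is a bialgebra with $\Delta(t_{ij}(u))=\sum_k t_{ik}(u)\otimes t_{kj}(u)$ and $\varepsilon(t_{ij}(u))=\delta_{ij}$, understood coefficientwise. For $a\in\mathbb C$, $t_{ij}(u+a)$ is obtained by expanding $(u+a)^{-r}$ in powers of $u^{-1}$.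 The Yangian minor of tuples $I,J\in[n]^d$ is $$t^I_J(u)=\sum_{\sigma\in\mathfrak S_d}\operatorname{sgn}(\sigma)\,t_{i_{\sigma(1)}j_1}(u)\,t_{i_{\sigma(2)}j_2}(u-1)\cdots t_{i_{\sigma(d)}j_d}(u-d+1).$$ *)

theory Defs
  imports Complex_Main "HOL-Library.Poly_Mapping" "HOL-Combinatorics.Permutations"
begin

type_synonym 'a vec = "'a \<Rightarrow>\<^sub>0 complex"

definition bv :: "'a \<Rightarrow> 'a vec" where
  "bv a = Poly_Mapping.single a 1"

definition smult :: "complex \<Rightarrow> 'a vec \<Rightarrow> 'a vec" where
  "smult c x = Poly_Mapping.map (\<lambda>z. c * z) x"

definition lext :: "('a \<Rightarrow> 'b vec) \<Rightarrow> 'a vec \<Rightarrow> 'b vec" where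
  "lext f x = (\<Sum>a\<in>Poly_Mapping.keys x. smult (Poly_Mapping.lookup x a) (f a))"

definition tens :: "'a vec \<Rightarrow> 'b vec \<Rightarrow> ('a \<times> 'b) vec" where
  "tens x y = lext (\<lambda>p. lext (\<lambda>q. bv (p, q)) y) x"

inductive_set cspan :: "'a vec set \<Rightarrow> 'a vec set" for S where
  base: "x \<in> S \<Longrightarrow> x \<in> cspan S"
| zero: "0 \<in> cspan S"
| add: "x \<in> cspan S \<Longrightarrow> y \<in> cspan S \<Longrightarrow> x + y \<in> cspan S"
| smult: "x \<in> cspan S \<Longrightarrow> smult c x \<in> cspan S"

text \<open>A letter (i,j,r) stands for the generator t_ij^(r); words are noncommutative monomials.\<close>
type_synonym ygen = "nat \<times> nat \<times> nat"
type_synonym FA = "ygen list vec"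

definition fa_one :: FA where "fa_one = bv []"

definition fa_mult :: "FA \<Rightarrow> FA \<Rightarrow> FA" where
  "fa_mult x y = lext (\<lambda>v. lext (\<lambda>w. bv (v @ w)) y) x"

definition T :: "nat \<Rightarrow> nat \<Rightarrow> nat \<Rightarrow> FA" where
  "T i j r = (if r = 0 then (if i = j then fa_one else 0) else bv [(i, j, r)])"

definition yrel :: "nat \<Rightarrow> nat \<Rightarrow> nat \<Rightarrow> nat \<Rightarrow> nat \<Rightarrow> nat \<Rightarrow> FA" where
  "yrel i j k l r s =
     (fa_mult (T i j (Suc r)) (T k l s) - fa_mult (T k l s) (T i j (Suc r)))
   - (fa_mult (T i j r) (T k l (Suc s)) - fa_mult (T k l (Suc s)) (T i j r))
   - (fa_mult (T k j r) (T i l s) - fa_mult (T k j s) (T i l r))"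

text \<open>Two-sided ideal of the free algebra generated by the defining relations of Y_n.\<close>
definition yideal :: "nat \<Rightarrow> FA set" where
  "yideal n = cspan {fa_mult (fa_mult a (yrel i j k l r s)) b | a b i j k l r s.
      i \<in> {1..n} \<and> j \<in> {1..n} \<and> k \<in> {1..n} \<and> l \<in> {1..n}}"

text \<open>Comultiplication on representatives: Delta(t_ij^(r)) = sum_k sum_(a+b=r) t_ik^(a) (x) t_kj^(b),
  extended multiplicatively to words and linearly to the free algebra.\<close>
definition tt_mult :: "(ygen list \<times> ygen list) vec \<Rightarrow> (ygen list \<times> ygen list) vec
                       \<Rightarrow> (ygen list \<times> ygen list) vec" where
  "tt_mult x y = lext (\<lambda>(v1, v2). lext (\<lambda>(w1, w2). bv (v1 @ w1, v2 @ w2)) y) x"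

definition delta_gen :: "nat \<Rightarrow> ygen \<Rightarrow> (ygen list \<times> ygen list) vec" where
  "delta_gen n g = (case g of (i, j, r) \<Rightarrow>
      (\<Sum>k\<in>{1..n}. \<Sum>a\<in>{0..r}. tens (T i k a) (T k j (r - a))))"

definition delta_word :: "nat \<Rightarrow> ygen list \<Rightarrow> (ygen list \<times> ygen list) vec" where
  "delta_word n w = foldr (\<lambda>g acc. tt_mult (delta_gen n g) acc) w (bv ([], []))"

text \<open>Coefficient of u^-s in t_ij(u+a): (u+a)^-r expanded in powers of u^-1.\<close>
definition tser :: "nat \<Rightarrow> nat \<Rightarrow> complex \<Rightarrow> nat \<Rightarrow> FA" where
  "tser i j a s = (if s = 0 then T i j 0
     else (\<Sum>r\<in>{1..s}. smult (((- of_nat r) gchoose (s - r)) * a ^ (s - r)) (T i j r)))"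

definition ser_mult :: "(nat \<Rightarrow> FA) \<Rightarrow> (nat \<Rightarrow> FA) \<Rightarrow> nat \<Rightarrow> FA" where
  "ser_mult f g s = (\<Sum>m\<in>{0..s}. fa_mult (f m) (g (s - m)))"

definition ser_one :: "nat \<Rightarrow> FA" where
  "ser_one s = (if s = 0 then fa_one else 0)"

text \<open>Coefficient of u^-s in the Yangian minor t^I_J(u)
  = sum_sigma sgn sigma t_(i_sigma(1) j_1)(u) t_(i_sigma(2) j_2)(u-1) ... (0-based positions).\<close>
definition tminor :: "nat list \<Rightarrow> nat list \<Rightarrow> nat \<Rightarrow> FA" where
  "tminor I J s = (\<Sum>\<sigma>\<in>{\<sigma>. \<sigma> permutes {..<length J}}.
      smult (of_int (sign \<sigma>))
        (foldr (\<lambda>k acc. ser_mult (tser (I ! \<sigma> k) (J ! k) (- of_nat k)) acc)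
               [0..<length J] ser_one s))"

text \<open>Basis symbol (I, r) stands for f~_I^(r).\<close>
type_synonym cbas = "nat list \<times> nat"

definition valid_tuple :: "nat \<Rightarrow> nat \<Rightarrow> nat list \<Rightarrow> bool" where
  "valid_tuple n d I \<longleftrightarrow> length I = d \<and> set I \<subseteq> {1..n}"

definition perm_tuple :: "(nat \<Rightarrow> nat) \<Rightarrow> nat list \<Rightarrow> nat list" where
  "perm_tuple \<sigma> I = map (\<lambda>k. I ! \<sigma> k) [0..<length I]"

definition calt :: "nat \<Rightarrow> nat \<Rightarrow> cbas vec set" where
  "calt n d = cspan {bv (perm_tuple \<sigma> I, r) - smult (of_int (sign \<sigma>)) (bv (I, r)) | \<sigma> I r.
      valid_tuple n d I \<and> \<sigma> permutes {..<d}}"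

definition incr_tuples :: "nat \<Rightarrow> nat \<Rightarrow> nat list set" where
  "incr_tuples n d = {J. length J = d \<and> sorted_wrt (<) J \<and> set J \<subseteq> {1..n}}"

text \<open>rho(f~_I^(r)) = coefficient of u^-r in sum_J f~_J(u) (x) t^J_I(u).\<close>
definition rho_bas :: "nat \<Rightarrow> nat \<Rightarrow> cbas \<Rightarrow> (cbas \<times> ygen list) vec" where
  "rho_bas n d p = (case p of (I, r) \<Rightarrow>
      (\<Sum>J\<in>incr_tuples n d. \<Sum>a\<in>{0..r}. tens (bv (J, a)) (tminor J I (r - a))))"

definition rho :: "nat \<Rightarrow> nat \<Rightarrow> cbas vec \<Rightarrow> (cbas \<times> ygen list) vec" where
  "rho n d = lext (rho_bas n d)"

text \<open>rho (x) id and id (x) Delta, id (x) epsilon on representatives.\<close>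
definition rho_id :: "nat \<Rightarrow> nat \<Rightarrow> (cbas \<times> ygen list) vec \<Rightarrow> (cbas \<times> ygen list \<times> ygen list) vec" where
  "rho_id n d = lext (\<lambda>(p, w). lext (\<lambda>(q, v). bv (q, v, w)) (rho_bas n d p))"

definition id_delta :: "nat \<Rightarrow> (cbas \<times> ygen list) vec \<Rightarrow> (cbas \<times> ygen list \<times> ygen list) vec" where
  "id_delta n = lext (\<lambda>(p, w). lext (\<lambda>(v1, v2). bv (p, v1, v2)) (delta_word n w))"

text \<open>epsilon(t_ij^(r)) = 0 for r \<ge> 1, so epsilon of a word is 1 iff the word is empty.\<close>
definition id_eps :: "(cbas \<times> ygen list) vec \<Rightarrow> cbas vec" where
  "id_eps = lext (\<lambda>(p, w). if w = [] then bv p else 0)"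

text \<open>Kernels of the projections onto C (x) Y and C (x) Y (x) Y.\<close>
definition ker2 :: "nat \<Rightarrow> nat \<Rightarrow> (cbas \<times> ygen list) vec set" where
  "ker2 n d = cspan ({tens a y | a y. a \<in> calt n d} \<union> {tens x b | x b. b \<in> yideal n})"

definition ker3 :: "nat \<Rightarrow> nat \<Rightarrow> (cbas \<times> ygen list \<times> ygen list) vec set" where
  "ker3 n d = cspan ({tens a z | a z. a \<in> calt n d}
      \<union> {tens x (tens b y) | x b y. b \<in> yideal n}
      \<union> {tens x (tens y b) | x b y. b \<in> yideal n})"

end

theory Submission
  imports Defs "HOL-Library.Product_Plus" "HOL-Computational_Algebra.Formal_Power_Series"
begin

(* Compatibility with the alternating relations and coassociativity both reduce to the
   antisymmetry of the quantum minor t^J_L(u) in its column tuple L modulo the Yangian ideal.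
   For an adjacent transposition of columns this is the defining relation at u - v = 1,
   [t_ij(u), t_kl(u-1)] = t_kj(u) t_il(u-1) - t_kj(u-1) t_il(u), symmetrised in j and l;
   general permutations follow since adjacent transpositions generate the symmetric group.
   Antisymmetry also makes minors with a repeated column vanish, so in
   Delta(t^J_I(u)) = sum_L t^J_L(u) (x) t_(L_1 I_1)(u) ... t_(L_d I_d)(u-d+1), taken over all
   tuples L, only distinct L survive, and grouping them by their underlying increasing tuple K
   yields sum_K t^J_K(u) (x) t^K_I(u).

   The counit axiom holds because epsilon(t^J_I(u)) = sgn(sigma) if I = sigma J and 0 otherwise. *)

unbundle fps_syntax

text \<open>Concatenation makes words a monoid, so that Poly_Mapping's convolution product on
  \<open>ygen list vec\<close> is the multiplication of the free algebra.\<close>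

instantiation list :: (type) monoid_add
begin
definition "zero_list = []"
definition "plus_list = (@)"
instance by standard (auto simp: zero_list_def plus_list_def)
end

lemma plus_list_eq [simp]: "(v::'a list) + w = v @ w"
  by (simp add: plus_list_def)

lemma zero_list_eq [simp]: "(0::'a list) = []"
  by (simp add: zero_list_def)

section \<open>Finitely supported vectors\<close>

lemma lookup_smult [simp]: "Poly_Mapping.lookup (smult c x) k = c * Poly_Mapping.lookup x k"
  by (simp add: smult_def map.rep_eq when_def)

lemma smult_add: "smult c (x + y) = smult c x + smult c y"
  by (rule poly_mapping_eqI) (simp add: lookup_add algebra_simps)

lemma smult_add_left: "smult (c + d) x = smult c x + smult d x"
  by (rule poly_mapping_eqI) (simp add: lookup_add algebra_simps)

lemma smult_smult [simp]: "smult c (smult d x) = smult (c * d) x"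
  by (rule poly_mapping_eqI) simp

lemma smult_one [simp]: "smult 1 x = x"
  by (rule poly_mapping_eqI) simp

lemma smult_zero [simp]: "smult c 0 = 0"
  by (rule poly_mapping_eqI) simp

lemma smult_zero_left [simp]: "smult 0 x = 0"
  by (rule poly_mapping_eqI) simp

lemma smult_minus: "smult c (- x) = - smult c x"
  by (rule poly_mapping_eqI) simp

lemma smult_diff: "smult c (x - y) = smult c x - smult c y"
  by (rule poly_mapping_eqI) (simp add: lookup_minus algebra_simps)

lemma smult_minus_left: "smult (- c) x = - smult c x"
  by (rule poly_mapping_eqI) simp

lemma smult_diff_left: "smult (c - d) x = smult c x - smult d x"
  by (rule poly_mapping_eqI) (simp add: lookup_minus algebra_simps)

lemma smult_sum: "smult c (sum f A) = (\<Sum>a\<in>A. smult c (f a))"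
  by (rule poly_mapping_eqI) (simp add: lookup_sum sum_distrib_left)

lemma smult_sum_left: "smult (sum f A) x = (\<Sum>a\<in>A. smult (f a) x)"
  by (rule poly_mapping_eqI) (simp add: lookup_sum sum_distrib_right)

lemma smult_bv: "smult c (bv a) = Poly_Mapping.single a c"
  by (rule poly_mapping_eqI) (simp add: bv_def lookup_single when_def)

lemma keys_smult_subset: "Poly_Mapping.keys (smult c x) \<subseteq> Poly_Mapping.keys x"
  by (auto simp: in_keys_iff)

lemma self_minus_smult_minus_one: "x - smult (- 1) x = x + x"
  by (simp add: smult_minus_left)

lemma poly_mapping_eq_sum_single:
  assumes "finite S" "Poly_Mapping.keys x \<subseteq> S"
  shows "x = (\<Sum>a\<in>S. Poly_Mapping.single a (Poly_Mapping.lookup x a))"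
proof (rule poly_mapping_eqI)
  fix k
  have "(\<Sum>a\<in>S. Poly_Mapping.lookup (Poly_Mapping.single a (Poly_Mapping.lookup x a)) k)
      = (\<Sum>a\<in>S. if a = k then Poly_Mapping.lookup x k else 0)"
    by (rule sum.cong) (auto simp: lookup_single when_def)
  also have "\<dots> = Poly_Mapping.lookup x k"
    using assms by (auto simp: in_keys_iff)
  finally show "Poly_Mapping.lookup x k
      = Poly_Mapping.lookup (\<Sum>a\<in>S. Poly_Mapping.single a (Poly_Mapping.lookup x a)) k"
    by (simp add: lookup_sum)
qed

lemma lext_conv_sum_superset:
  assumes "finite S" "Poly_Mapping.keys x \<subseteq> S"
  shows "lext f x = (\<Sum>a\<in>S. smult (Poly_Mapping.lookup x a) (f a))"
  unfolding lext_def using assms by (intro sum.mono_neutral_left) (auto simp: in_keys_iff)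

lemma lext_add: "lext f (x + y) = lext f x + lext f y"
proof -
  let ?S = "Poly_Mapping.keys x \<union> Poly_Mapping.keys y"
  have "lext f (x + y) = (\<Sum>a\<in>?S. smult (Poly_Mapping.lookup (x + y) a) (f a))"
    using keys_add[of x y] by (intro lext_conv_sum_superset) auto
  also have "\<dots> = lext f x + lext f y"
    by (subst (1 2) lext_conv_sum_superset[of ?S])
       (auto simp: lookup_add smult_add_left sum.distrib)
  finally show ?thesis .
qed

lemma lext_smult: "lext f (smult c x) = smult c (lext f x)"
  by (subst (1 2) lext_conv_sum_superset[of "Poly_Mapping.keys x"])
     (auto simp: keys_smult_subset smult_sum)

lemma lext_zero [simp]: "lext f 0 = 0"
  by (simp add: lext_def)

lemma lext_bv [simp]: "lext f (bv a) = f a"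
  by (subst lext_conv_sum_superset[of "{a}"]) (auto simp: bv_def lookup_single)

lemma lext_minus: "lext f (- x) = - lext f x"
  by (metis add_eq_0_iff lext_add lext_zero neg_eq_iff_add_eq_0)

lemma lext_diff: "lext f (x - y) = lext f x - lext f y"
  by (metis diff_conv_add_uminus lext_add lext_minus)

lemma lext_sum: "lext f (sum g A) = (\<Sum>a\<in>A. lext f (g a))"
  by (induction A rule: infinite_finite_induct) (auto simp: lext_add)

lemma lext_fun_zero [simp]: "lext (\<lambda>a. 0) x = 0"
  by (simp add: lext_def)

lemma lext_fun_add: "lext (\<lambda>a. f a + g a) x = lext f x + lext g x"
  by (simp add: lext_def smult_add sum.distrib)

lemma lext_fun_smult: "lext (\<lambda>a. smult c (f a)) x = smult c (lext f x)"
  by (simp add: lext_def smult_sum mult.commute)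

lemma lext_fun_minus: "lext (\<lambda>a. - f a) x = - lext f x"
  by (simp add: lext_def smult_minus sum_negf)

lemma lext_fun_diff: "lext (\<lambda>a. f a - g a) x = lext f x - lext g x"
  by (simp add: lext_def smult_diff sum_subtractf)

lemma lext_fun_sum: "lext (\<lambda>a. \<Sum>i\<in>I. f i a) x = (\<Sum>i\<in>I. lext (f i) x)"
  by (simp add: lext_def smult_sum sum.swap[of _ I])

lemma lext_lext: "lext g (lext f x) = lext (\<lambda>a. lext g (f a)) x"
  unfolding lext_def[of f] lext_def[of "\<lambda>a. lext g (f a)"] by (simp add: lext_sum lext_smult)

lemma lext_lext_swap: "lext (\<lambda>a. lext (\<lambda>b. f a b) y) x = lext (\<lambda>b. lext (\<lambda>a. f a b) x) y"
  by (simp add: lext_def smult_sum sum.swap[of _ "Poly_Mapping.keys y"] mult.commute)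

lemma lext_bv_id [simp]: "lext bv x = x"
  unfolding lext_def
  by (subst (3) poly_mapping_eq_sum_single[of "Poly_Mapping.keys x" x]) (auto simp: smult_bv)

lemma tens_bv [simp]: "tens (bv a) (bv b) = bv (a, b)"
  by (simp add: tens_def)

lemma tens_bv_left: "tens (bv a) y = lext (\<lambda>q. bv (a, q)) y"
  by (simp add: tens_def)

lemma tens_add_right: "tens x (y + z) = tens x y + tens x z"
  by (simp add: tens_def lext_add lext_fun_add)

lemma tens_smult_left: "tens (smult c x) z = smult c (tens x z)"
  by (simp add: tens_def lext_smult)

lemma tens_smult_right: "tens x (smult c z) = smult c (tens x z)"
  by (simp add: tens_def lext_smult lext_fun_smult)

lemma tens_zero_left [simp]: "tens 0 z = 0"
  by (simp add: tens_def)

lemma tens_zero_right [simp]: "tens x 0 = 0"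
  by (simp add: tens_def)

lemma tens_minus_right: "tens x (- z) = - tens x z"
  by (simp add: tens_def lext_minus lext_fun_minus)

lemma tens_diff_left: "tens (x - y) z = tens x z - tens y z"
  by (simp add: tens_def lext_diff)

lemma tens_diff_right: "tens x (y - z) = tens x y - tens x z"
  by (simp add: tens_def lext_diff lext_fun_diff)

lemma tens_sum_left: "tens (sum f A) z = (\<Sum>a\<in>A. tens (f a) z)"
  by (simp add: tens_def lext_sum)

lemma tens_sum_right: "tens x (sum f A) = (\<Sum>a\<in>A. tens x (f a))"
  by (simp add: tens_def lext_sum lext_fun_sum)

lemma tens_sum_sum: "tens (sum f A) (sum g B) = (\<Sum>a\<in>A. \<Sum>b\<in>B. tens (f a) (g b))"
  by (simp add: tens_sum_left tens_sum_right) (rule sum.swap)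

lemma tens_smult_smult: "tens (smult c x) (smult d y) = smult (c * d) (tens x y)"
  by (simp add: tens_smult_left tens_smult_right mult.commute)

lemma tens_lext_right: "tens x (lext f y) = lext (\<lambda>b. tens x (f b)) y"
  by (simp add: lext_def tens_sum_right tens_smult_right)

definition vec_linear :: "('a vec \<Rightarrow> 'b vec) \<Rightarrow> bool" where
  "vec_linear f \<longleftrightarrow> (\<forall>x y. f (x + y) = f x + f y) \<and> (\<forall>c x. f (smult c x) = smult c (f x))"

lemma vec_linear_lext: "vec_linear (lext f)"
  by (simp add: vec_linear_def lext_add lext_smult)

lemma vec_linear_tens_right: "vec_linear (\<lambda>y. tens x y)"
  by (simp add: vec_linear_def tens_add_right tens_smult_right)

lemma cspan_linear_image:
  assumes "vec_linear f" "\<And>x. x \<in> S \<Longrightarrow> f x \<in> cspan U" "x \<in> cspan S"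
  shows "f x \<in> cspan U"
  using assms(3)
proof induction
  case zero
  have "f 0 = 0"
    using assms(1) unfolding vec_linear_def by (metis smult_zero_left)
  then show ?case by (simp add: cspan.zero)
qed (use assms in \<open>auto simp: vec_linear_def intro: cspan.intros\<close>)

lemma cspan_minus: "x \<in> cspan S \<Longrightarrow> - x \<in> cspan S"
  using cspan.smult[of x S "- 1"] by (simp add: smult_minus_left)

lemma cspan_sum: "(\<And>a. a \<in> A \<Longrightarrow> f a \<in> cspan S) \<Longrightarrow> sum f A \<in> cspan S"
  by (induction A rule: infinite_finite_induct) (auto intro: cspan.intros)

lemma cspan_lext: "(\<And>a. a \<in> Poly_Mapping.keys x \<Longrightarrow> f a \<in> cspan S) \<Longrightarrow> lext f x \<in> cspan S"
  unfolding lext_def by (intro cspan_sum cspan.smult)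

lemma cspan_half:
  assumes "x + x \<in> cspan S"
  shows "x \<in> cspan S"
proof -
  have "x + x = smult 2 x"
    by (rule poly_mapping_eqI) (simp add: lookup_add)
  then show ?thesis
    using cspan.smult[OF assms, of "1/2"] by simp
qed

section \<open>The free algebra and the Yangian ideal\<close>

lemma bv_mult: "bv (a::'a::monoid_add) * bv b = bv (a + b)"
  by (simp add: bv_def mult_single)

lemma bv_zero_eq_one: "bv (0::'a::monoid_add) = 1"
  by (simp add: bv_def)

lemma mult_conv_sum_single:
  fixes x y :: "'a::monoid_add vec"
  shows "x * y = (\<Sum>a\<in>Poly_Mapping.keys x. \<Sum>b\<in>Poly_Mapping.keys y.
      Poly_Mapping.single (a + b) (Poly_Mapping.lookup x a * Poly_Mapping.lookup y b))"
proof -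
  have "x * y = (\<Sum>a\<in>Poly_Mapping.keys x. Poly_Mapping.single a (Poly_Mapping.lookup x a))
      * (\<Sum>b\<in>Poly_Mapping.keys y. Poly_Mapping.single b (Poly_Mapping.lookup y b))"
    by (simp flip: poly_mapping_eq_sum_single)
  then show ?thesis
    by (simp add: sum_distrib_left sum_distrib_right mult_single) (rule sum.swap)
qed

lemma smult_mult_left: "smult c (x :: 'a::monoid_add vec) * y = smult c (x * y)"
  by (simp add: smult_def mult_map_scale_conv_mult mult.assoc)

lemma smult_mult_right: "(x :: 'a::monoid_add vec) * smult c y = smult c (x * y)"
proof -
  have "x * smult c y = (\<Sum>a\<in>Poly_Mapping.keys x. \<Sum>b\<in>Poly_Mapping.keys y.
      Poly_Mapping.single (a + b) (Poly_Mapping.lookup x a * (c * Poly_Mapping.lookup y b)))"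
    by (subst poly_mapping_eq_sum_single[of "Poly_Mapping.keys y" "smult c y"])
       (auto simp: keys_smult_subset mult_conv_sum_single[of x] sum_distrib_left
         mult_single sum.swap[of _ "Poly_Mapping.keys x"] intro!: sum.cong
         simp flip: poly_mapping_eq_sum_single)
  also have "\<dots> = smult c (x * y)"
    by (simp add: mult_conv_sum_single smult_sum mult_ac flip: smult_bv)
  finally show ?thesis .
qed

lemma smult_mult_smult: "smult c (x :: 'a::monoid_add vec) * smult d y = smult (c * d) (x * y)"
  by (simp add: smult_mult_left smult_mult_right mult.commute)

lemma lext_mult_left: "lext (\<lambda>w. (z::'a::monoid_add vec) * f w) y = z * lext f y"
  by (simp add: lext_def sum_distrib_left smult_mult_right)

lemma lext_mult_right: "lext (\<lambda>w. f w * (z::'a::monoid_add vec)) y = lext f y * z"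
  by (simp add: lext_def sum_distrib_right smult_mult_left)

lemma lext_mult:
  fixes f :: "'a::monoid_add \<Rightarrow> 'b::monoid_add vec"
  assumes "\<And>a b. f (a + b) = f a * f b"
  shows "lext f (x * y) = lext f x * lext f y"
proof -
  have "lext f (x * y) = (\<Sum>a\<in>Poly_Mapping.keys x. \<Sum>b\<in>Poly_Mapping.keys y.
      smult (Poly_Mapping.lookup x a * Poly_Mapping.lookup y b) (f (a + b)))"
    by (subst mult_conv_sum_single) (simp add: lext_sum lext_smult flip: smult_bv)
  also have "\<dots> = (\<Sum>a\<in>Poly_Mapping.keys x. \<Sum>b\<in>Poly_Mapping.keys y.
      smult (Poly_Mapping.lookup x a) (f a) * smult (Poly_Mapping.lookup y b) (f b))"
    by (simp add: assms smult_mult_smult)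
  also have "\<dots> = lext f x * lext f y"
    by (simp add: lext_def sum_distrib_left sum_distrib_right) (rule sum.swap)
  finally show ?thesis .
qed

lemma lext_lext_bv_add:
  fixes x y :: "'a::monoid_add vec"
  shows "lext (\<lambda>v. lext (\<lambda>w. bv (v + w)) y) x = x * y"
  by (simp add: lext_mult_left lext_mult_right flip: bv_mult)

lemma fa_mult_eq [simp]: "fa_mult x y = x * y"
  using lext_lext_bv_add[of y x] by (simp add: fa_mult_def)

lemma fa_one_eq [simp]: "fa_one = 1"
  using bv_zero_eq_one[where 'a="ygen list"] by (simp add: fa_one_def)

lemma one_eq_bv_Nil: "(1::FA) = bv []"
  using bv_zero_eq_one[where 'a="ygen list"] by simp

lemma tt_mult_eq [simp]: "tt_mult x y = x * y"
  using lext_lext_bv_add[of y x] by (simp add: tt_mult_def case_prod_unfold plus_prod_def)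

lemma vec_linear_mult_both: "vec_linear (\<lambda>y. (c::'a::monoid_add vec) * y * e)"
  by (simp add: vec_linear_def distrib_left distrib_right smult_mult_left smult_mult_right)

lemma yideal_generator:
  assumes "i \<in> {1..n}" "j \<in> {1..n}" "k \<in> {1..n}" "l \<in> {1..n}"
  shows "a * yrel i j k l r s * b \<in> yideal n"
proof -
  have "fa_mult (fa_mult a (yrel i j k l r s)) b \<in> yideal n"
    unfolding yideal_def using assms by (intro cspan.base) blast
  then show ?thesis by simp
qed

lemma yrel_in_yideal:
  "i \<in> {1..n} \<Longrightarrow> j \<in> {1..n} \<Longrightarrow> k \<in> {1..n} \<Longrightarrow> l \<in> {1..n} \<Longrightarrow> yrel i j k l r s \<in> yideal n"
  using yideal_generator[of i n j k l 1 r s 1] by simp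

lemma yideal_mult_both:
  assumes "x \<in> yideal n"
  shows "c * x * e \<in> yideal n"
  using assms unfolding yideal_def
proof (rule cspan_linear_image[OF vec_linear_mult_both, rotated], fold yideal_def)
  fix y assume "y \<in> {fa_mult (fa_mult a (yrel i j k l r s)) b | a b i j k l r s.
      i \<in> {1..n} \<and> j \<in> {1..n} \<and> k \<in> {1..n} \<and> l \<in> {1..n}}"
  then obtain a b i j k l r s where "y = a * yrel i j k l r s * b"
    and "i \<in> {1..n}" "j \<in> {1..n}" "k \<in> {1..n}" "l \<in> {1..n}"
    by auto
  then show "c * y * e \<in> yideal n"
    using yideal_generator[of i n j k l "c * a" r s "b * e"] by (simp add: mult.assoc)
qed

lemma yideal_mult_left: "x \<in> yideal n \<Longrightarrow> c * x \<in> yideal n"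
  using yideal_mult_both[of x n c 1] by simp

lemma yideal_mult_right: "x \<in> yideal n \<Longrightarrow> x * e \<in> yideal n"
  using yideal_mult_both[of x n 1 e] by simp

lemma yideal_zero: "0 \<in> yideal n"
  unfolding yideal_def by (rule cspan.zero)

lemma yideal_add: "x \<in> yideal n \<Longrightarrow> y \<in> yideal n \<Longrightarrow> x + y \<in> yideal n"
  unfolding yideal_def by (rule cspan.add)

lemma yideal_smult: "x \<in> yideal n \<Longrightarrow> smult c x \<in> yideal n"
  unfolding yideal_def by (rule cspan.smult)

lemma yideal_sum: "(\<And>a. a \<in> A \<Longrightarrow> f a \<in> yideal n) \<Longrightarrow> sum f A \<in> yideal n"
  unfolding yideal_def by (rule cspan_sum)

section \<open>Generating series of the generators\<close>

lemma T_zero: "T i j 0 = (if i = j then 1 else 0)"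
  by (simp add: T_def)

definition neg_binomial_series :: "complex \<Rightarrow> nat \<Rightarrow> complex fps" where
  "neg_binomial_series a r = Abs_fps (\<lambda>N. ((- of_nat r) gchoose N) * a ^ N)"

text \<open>The expansion of (u + a)^-r in X = u^-1, namely X^r (1 + a X)^-r.\<close>

definition shifted_power_series :: "complex \<Rightarrow> nat \<Rightarrow> complex fps" where
  "shifted_power_series a r = fps_X ^ r * neg_binomial_series a r"

lemma shifted_power_series_nth:
  "shifted_power_series a r $ N = (if N < r then 0 else ((- of_nat r) gchoose (N - r)) * a ^ (N - r))"
  by (simp add: shifted_power_series_def neg_binomial_series_def fps_X_power_mult_nth)

lemma neg_binomial_series_Suc:
  "neg_binomial_series a (Suc r) * (1 + fps_const a * fps_X) = neg_binomial_series a r"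
proof (rule fps_ext)
  fix N
  let ?G = "neg_binomial_series a (Suc r)"
  show "(?G * (1 + fps_const a * fps_X)) $ N = neg_binomial_series a r $ N"
  proof (cases N)
    case 0
    then show ?thesis by (simp add: neg_binomial_series_def)
  next
    case (Suc M)
    have "?G * (1 + fps_const a * fps_X) = ?G + fps_const a * (fps_X * ?G)"
      by (simp add: algebra_simps)
    then have "(?G * (1 + fps_const a * fps_X)) $ N
        = a ^ N * (((- of_nat (Suc r)) gchoose Suc M) + ((- of_nat (Suc r)) gchoose M))"
      using Suc by (simp add: neg_binomial_series_def algebra_simps)
    also have "((- of_nat (Suc r)) gchoose Suc M) + ((- of_nat (Suc r)) gchoose M)
        = ((- of_nat r) gchoose Suc M :: complex)"
      using gbinomial_Suc_Suc[of "- of_nat (Suc r) :: complex" M] by (simp add: add.commute)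
    finally show ?thesis
      using Suc by (simp add: neg_binomial_series_def)
  qed
qed

lemma shifted_power_series_Suc:
  "shifted_power_series a (Suc r) * (1 + fps_const a * fps_X) = fps_X * shifted_power_series a r"
  by (simp add: shifted_power_series_def mult.assoc neg_binomial_series_Suc)

lemma shifted_power_series_add:
  "shifted_power_series a r * shifted_power_series a s = shifted_power_series a (r + s)"
proof -
  let ?q = "1 + fps_const a * fps_X"
  have inverse: "neg_binomial_series a r * ?q ^ r = 1" for r
  proof (induction r)
    case 0
    then show ?case by (simp add: neg_binomial_series_def fps_ext gbinomial_0_left)
  next
    case (Suc r)
    then show ?case
      by (simp add: mult.assoc flip: neg_binomial_series_Suc[of a r])
  qed
  have "?q $ 0 = 1"
    by simp
  then have nonzero: "?q ^ (r + s) \<noteq> 0"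
    by (metis one_neq_zero fps_zero_nth power_not_zero)
  have "neg_binomial_series a r * neg_binomial_series a s * ?q ^ (r + s)
      = (neg_binomial_series a r * ?q ^ r) * (neg_binomial_series a s * ?q ^ s)"
    by (simp add: power_add algebra_simps)
  also have "\<dots> = neg_binomial_series a (r + s) * ?q ^ (r + s)"
    by (simp only: inverse mult_1_left)
  finally have "neg_binomial_series a r * neg_binomial_series a s = neg_binomial_series a (r + s)"
    by (rule mult_right_cancel[OF nonzero, THEN iffD1])
  then show ?thesis
    by (simp add: shifted_power_series_def power_add algebra_simps)
qed

lemma shifted_power_series_mult_nth_eq_0:
  "N < r + s \<Longrightarrow> (shifted_power_series a r * shifted_power_series b s) $ N = 0"
proof -
  assume "N < r + s"
  have "shifted_power_series a r * shifted_power_series b s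
      = fps_X ^ (r + s) * (neg_binomial_series a r * neg_binomial_series b s)"
    by (simp add: shifted_power_series_def algebra_simps power_add)
  with \<open>N < r + s\<close> show ?thesis
    by (simp add: fps_X_power_mult_nth)
qed

text \<open>Multiplied by (u + a)(u + b), this is (u + a) - (u + b) = 1.\<close>

lemma shifted_power_series_difference:
  assumes "a = b + 1"
  shows "shifted_power_series a r * shifted_power_series b (Suc s)
       - shifted_power_series a (Suc r) * shifted_power_series b s
       = shifted_power_series a (Suc r) * shifted_power_series b (Suc s)"
proof -
  let ?P = shifted_power_series
  have "fps_X * (?P a r * ?P b (Suc s) - ?P a (Suc r) * ?P b s)
      = (fps_X * ?P a r) * ?P b (Suc s) - ?P a (Suc r) * (fps_X * ?P b s)"
    by (simp add: algebra_simps)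
  also have "\<dots> = ?P a (Suc r) * (1 + fps_const a * fps_X) * ?P b (Suc s)
      - ?P a (Suc r) * (?P b (Suc s) * (1 + fps_const b * fps_X))"
    by (simp only: shifted_power_series_Suc)
  also have "\<dots> = fps_X * (?P a (Suc r) * ?P b (Suc s))"
  proof -
    have "fps_const a = fps_const b + 1"
      using assms by (simp flip: fps_const_1_eq_1 del: fps_const_1_eq_1)
    then show ?thesis by (simp add: algebra_simps)
  qed
  finally show ?thesis
    by simp
qed

lemma tser_conv_sum:
  assumes "m \<le> M"
  shows "tser i j a m = (\<Sum>r\<le>M. smult (shifted_power_series a r $ m) (T i j r))"
proof (cases "m = 0")
  case True
  have "(\<Sum>r\<le>M. smult (shifted_power_series a r $ m) (T i j r))
      = (\<Sum>r\<in>{0}. smult (shifted_power_series a r $ m) (T i j r))"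
    by (rule sum.mono_neutral_right) (auto simp: True shifted_power_series_nth)
  then show ?thesis
    using True by (simp add: tser_def shifted_power_series_nth)
next
  case False
  have "(\<Sum>r\<le>M. smult (shifted_power_series a r $ m) (T i j r))
      = (\<Sum>r\<in>{1..m}. smult (shifted_power_series a r $ m) (T i j r))"
  proof (rule sum.mono_neutral_right)
    show "\<forall>r\<in>{..M} - {1..m}. smult (shifted_power_series a r $ m) (T i j r) = 0"
    proof
      fix r assume "r \<in> {..M} - {1..m}"
      then have "r = 0 \<or> m < r" by auto
      then show "smult (shifted_power_series a r $ m) (T i j r) = 0"
        using False by (auto simp: shifted_power_series_nth gbinomial_0_left)
    qed
  qed (use assms in auto)
  then show ?thesis
    using False by (simp add: tser_def shifted_power_series_nth)
qed

definition tseries :: "nat \<Rightarrow> nat \<Rightarrow> complex \<Rightarrow> FA fps" where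
  "tseries i j a = Abs_fps (tser i j a)"

lemma tseries_nth [simp]: "tseries i j a $ m = tser i j a m"
  by (simp add: tseries_def)

lemma tseries_mult_nth:
  "(tseries i j a * tseries k l b) $ N = (\<Sum>r\<le>N. \<Sum>s\<le>N.
      smult ((shifted_power_series a r * shifted_power_series b s) $ N) (T i j r * T k l s))"
proof -
  have "(tseries i j a * tseries k l b) $ N = (\<Sum>m=0..N.
      (\<Sum>r\<le>N. smult (shifted_power_series a r $ m) (T i j r))
      * (\<Sum>s\<le>N. smult (shifted_power_series b s $ (N - m)) (T k l s)))"
    by (simp add: fps_mult_nth tser_conv_sum[of _ N])
  also have "\<dots> = (\<Sum>m=0..N. \<Sum>r\<le>N. \<Sum>s\<le>N. smult
      (shifted_power_series a r $ m * shifted_power_series b s $ (N - m)) (T i j r * T k l s))"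
    by (simp add: sum_distrib_left sum_distrib_right smult_mult_smult)
       (rule sum.cong[OF refl], rule sum.swap)
  also have "\<dots> = (\<Sum>r\<le>N. \<Sum>s\<le>N. \<Sum>m=0..N. smult
      (shifted_power_series a r $ m * shifted_power_series b s $ (N - m)) (T i j r * T k l s))"
    by (subst sum.swap) (simp add: sum.swap[of _ "{0..N}"])
  finally show ?thesis
    by (simp add: fps_mult_nth smult_sum_left)
qed

lemma tseries_mult_nth_swap:
  "(tseries k l b * tseries i j a) $ N = (\<Sum>r\<le>N. \<Sum>s\<le>N.
      smult ((shifted_power_series a r * shifted_power_series b s) $ N) (T k l s * T i j r))"
  by (simp add: tseries_mult_nth mult.commute[of "shifted_power_series b _"]) (rule sum.swap)

lemma double_sum_shift_weights:
  fixes q :: "nat \<Rightarrow> nat \<Rightarrow> complex" and G :: "nat \<Rightarrow> nat \<Rightarrow> 'a vec"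
  assumes G0: "\<And>s. G 0 s = 0" "\<And>r. G r 0 = 0"
    and q_vanish: "\<And>r s. N < r + s \<Longrightarrow> q r s = 0"
    and q_diff: "\<And>r s. q r (Suc s) - q (Suc r) s = q (Suc r) (Suc s)"
  shows "(\<Sum>r\<le>N. \<Sum>s\<le>N. smult (q r s) (G (Suc r) s - G r (Suc s)))
       = (\<Sum>r\<le>N. \<Sum>s\<le>N. smult (q r s) (G r s))"
proof (cases N)
  case 0
  then show ?thesis by (simp add: G0)
next
  case (Suc M)
  have first: "(\<Sum>r\<le>N. \<Sum>s\<le>N. smult (q r s) (G (Suc r) s))
      = (\<Sum>r\<le>M. \<Sum>s\<le>M. smult (q r (Suc s)) (G (Suc r) (Suc s)))"
  proof -
    have "(\<Sum>r\<le>Suc M. \<Sum>s\<le>Suc M. smult (q r s) (G (Suc r) s))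
        = (\<Sum>r\<le>Suc M. \<Sum>s\<le>M. smult (q r (Suc s)) (G (Suc r) (Suc s)))"
      by (rule sum.cong[OF refl]) (simp add: sum.atMost_Suc_shift G0 del: sum.atMost_Suc)
    then show ?thesis
      using Suc by (simp add: q_vanish)
  qed
  have second: "(\<Sum>r\<le>N. \<Sum>s\<le>N. smult (q r s) (G r (Suc s)))
      = (\<Sum>r\<le>M. \<Sum>s\<le>M. smult (q (Suc r) s) (G (Suc r) (Suc s)))"
  proof -
    have "(\<Sum>r\<le>Suc M. \<Sum>s\<le>Suc M. smult (q r s) (G r (Suc s)))
        = (\<Sum>r\<le>M. \<Sum>s\<le>Suc M. smult (q (Suc r) s) (G (Suc r) (Suc s)))"
      by (subst sum.atMost_Suc_shift) (simp add: G0 del: sum.atMost_Suc)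
    then show ?thesis
      using Suc by (simp add: q_vanish)
  qed
  have third: "(\<Sum>r\<le>N. \<Sum>s\<le>N. smult (q r s) (G r s))
      = (\<Sum>r\<le>M. \<Sum>s\<le>M. smult (q (Suc r) (Suc s)) (G (Suc r) (Suc s)))"
    unfolding Suc by (subst sum.atMost_Suc_shift) (simp add: sum.atMost_Suc_shift G0 del: sum.atMost_Suc)
  have "(\<Sum>r\<le>N. \<Sum>s\<le>N. smult (q r s) (G (Suc r) s - G r (Suc s)))
      = (\<Sum>r\<le>N. \<Sum>s\<le>N. smult (q r s) (G (Suc r) s))
        - (\<Sum>r\<le>N. \<Sum>s\<le>N. smult (q r s) (G r (Suc s)))"
    by (simp add: smult_diff sum_subtractf)
  also have "\<dots> = (\<Sum>r\<le>M. \<Sum>s\<le>M. smult (q r (Suc s) - q (Suc r) s) (G (Suc r) (Suc s)))"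
    by (simp only: first second smult_diff_left sum_subtractf)
  also have "\<dots> = (\<Sum>r\<le>N. \<Sum>s\<le>N. smult (q r s) (G r s))"
    by (simp only: third q_diff)
  finally show ?thesis .
qed

definition fps_in_yideal :: "nat \<Rightarrow> FA fps \<Rightarrow> bool" where
  "fps_in_yideal n F \<longleftrightarrow> (\<forall>s. F $ s \<in> yideal n)"

lemma fps_in_yideal_add: "fps_in_yideal n F \<Longrightarrow> fps_in_yideal n G \<Longrightarrow> fps_in_yideal n (F + G)"
  by (simp add: fps_in_yideal_def yideal_add)

lemma fps_in_yideal_mult_left: "fps_in_yideal n F \<Longrightarrow> fps_in_yideal n (A * F)"
  by (simp add: fps_in_yideal_def fps_mult_nth yideal_sum yideal_mult_left)

lemma fps_in_yideal_mult_right: "fps_in_yideal n F \<Longrightarrow> fps_in_yideal n (F * A)"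
  by (simp add: fps_in_yideal_def fps_mult_nth yideal_sum yideal_mult_right)

text \<open>The defining relations amount to
  (w - v) [t_ij(w), t_kl(v)] = t_kj(w) t_il(v) - t_kj(v) t_il(w); here w = u + a and v = u + b,
  so w - v = 1.\<close>

lemma tseries_commutator_relation:
  assumes "i \<in> {1..n}" "j \<in> {1..n}" "k \<in> {1..n}" "l \<in> {1..n}" and "a = b + 1"
  shows "fps_in_yideal n (tseries i j a * tseries k l b - tseries k l b * tseries i j a
                          - tseries k j a * tseries i l b + tseries k j b * tseries i l a)"
  unfolding fps_in_yideal_def
proof
  fix N
  define q where "q r s = (shifted_power_series a r * shifted_power_series b s) $ N" for r s
  define G where "G r s = T i j r * T k l s - T k l s * T i j r" for r s
  define H where "H r s = T k j r * T i l s - T k j s * T i l r" for r s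
  have "(tseries i j a * tseries k l b - tseries k l b * tseries i j a
         - tseries k j a * tseries i l b + tseries k j b * tseries i l a) $ N
      = (\<Sum>r\<le>N. \<Sum>s\<le>N. smult (q r s) (T i j r * T k l s))
        - (\<Sum>r\<le>N. \<Sum>s\<le>N. smult (q r s) (T k l s * T i j r))
        - (\<Sum>r\<le>N. \<Sum>s\<le>N. smult (q r s) (T k j r * T i l s))
        + (\<Sum>r\<le>N. \<Sum>s\<le>N. smult (q r s) (T k j s * T i l r))"
    unfolding q_def
    by (simp only: fps_add_nth fps_sub_nth tseries_mult_nth[of i j a k l b]
        tseries_mult_nth_swap[of k l b i j a] tseries_mult_nth[of k j a i l b]
        tseries_mult_nth_swap[of k j b i l a])
  also have "\<dots> = (\<Sum>r\<le>N. \<Sum>s\<le>N. smult (q r s) (G r s)) - (\<Sum>r\<le>N. \<Sum>s\<le>N. smult (q r s) (H r s))"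
    by (simp add: G_def H_def smult_diff smult_add sum_subtractf sum.distrib algebra_simps)
  also have "(\<Sum>r\<le>N. \<Sum>s\<le>N. smult (q r s) (G r s))
      = (\<Sum>r\<le>N. \<Sum>s\<le>N. smult (q r s) (G (Suc r) s - G r (Suc s)))"
  proof (rule double_sum_shift_weights[symmetric])
    show "G 0 s = 0" "G r 0 = 0" for r s
      by (simp_all add: G_def T_zero)
    show "N < r + s \<Longrightarrow> q r s = 0" for r s
      by (simp add: q_def shifted_power_series_mult_nth_eq_0)
    show "q r (Suc s) - q (Suc r) s = q (Suc r) (Suc s)" for r s
      using shifted_power_series_difference[OF \<open>a = b + 1\<close>, of r s]
      by (simp add: q_def flip: fps_sub_nth)
  qed
  also have "(\<Sum>r\<le>N. \<Sum>s\<le>N. smult (q r s) (G (Suc r) s - G r (Suc s)))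
      - (\<Sum>r\<le>N. \<Sum>s\<le>N. smult (q r s) (H r s))
      = (\<Sum>r\<le>N. \<Sum>s\<le>N. smult (q r s) (yrel i j k l r s))"
    by (simp add: yrel_def G_def H_def smult_diff sum_subtractf)
  also have "\<dots> \<in> yideal n"
    using assms by (intro yideal_sum yideal_smult yrel_in_yideal)
  finally show "(tseries i j a * tseries k l b - tseries k l b * tseries i j a
      - tseries k j a * tseries i l b + tseries k j b * tseries i l a) $ N \<in> yideal n" .
qed

section \<open>Permutations of tuples\<close>

definition perms :: "nat \<Rightarrow> (nat \<Rightarrow> nat) set" where
  "perms d = {\<sigma>. \<sigma> permutes {..<d}}"

lemma finite_perms [simp]: "finite (perms d)"
  by (simp add: perms_def finite_permutations)

lemma perms_less: "\<sigma> \<in> perms d \<Longrightarrow> k < d \<Longrightarrow> \<sigma> k < d"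
  using permutes_in_image[of \<sigma> "{..<d}" k] by (auto simp: perms_def)

lemma transpose_in_perms: "a < d \<Longrightarrow> b < d \<Longrightarrow> Transposition.transpose a b \<in> perms d"
  by (simp add: perms_def permutes_swap_id)

lemma sign_perms_comp:
  "\<sigma> \<in> perms d \<Longrightarrow> \<tau> \<in> perms d \<Longrightarrow> sign (\<sigma> \<circ> \<tau>) = sign \<sigma> * sign \<tau>"
  by (intro sign_compose) (auto simp: perms_def intro: permutes_imp_permutation)

lemma perms_comp: "\<sigma> \<in> perms d \<Longrightarrow> \<tau> \<in> perms d \<Longrightarrow> \<sigma> \<circ> \<tau> \<in> perms d"
  by (auto simp: perms_def intro: permutes_compose)

lemma sum_perms_comp_transpose:
  assumes "a < d" "b < d"
  shows "(\<Sum>\<sigma>\<in>perms d. f (\<sigma> \<circ> Transposition.transpose a b)) = (\<Sum>\<sigma>\<in>perms d. f \<sigma>)"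
  using assms
  by (intro sum.reindex_bij_witness[where i="\<lambda>\<sigma>. \<sigma> \<circ> Transposition.transpose a b"
        and j="\<lambda>\<sigma>. \<sigma> \<circ> Transposition.transpose a b"])
     (auto simp: o_assoc perms_comp transpose_in_perms)

lemma transpose_in_adjacent_closure:
  assumes adjacent: "\<And>k. Suc k < d \<Longrightarrow> P (Transposition.transpose k (Suc k))"
    and comp: "\<And>\<sigma> \<tau>. \<sigma> \<in> perms d \<Longrightarrow> \<tau> \<in> perms d \<Longrightarrow> P \<sigma> \<Longrightarrow> P \<tau> \<Longrightarrow> P (\<sigma> \<circ> \<tau>)"
  shows "a < b \<Longrightarrow> b < d \<Longrightarrow> P (Transposition.transpose a b)"
proof (induction b)
  case (Suc b)
  show ?case
  proof (cases "a = b")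
    case True
    then show ?thesis using Suc.prems adjacent by simp
  next
    case False
    let ?\<tau> = "Transposition.transpose b (Suc b)"
    have "a < b" using False Suc.prems by simp
    have swap: "Transposition.transpose a (Suc b) = (?\<tau> \<circ> Transposition.transpose a b) \<circ> ?\<tau>"
      using transpose_comp_triple[of "Suc b" a b] \<open>a < b\<close> by (simp add: transpose_commute)
    have perms: "?\<tau> \<in> perms d" "Transposition.transpose a b \<in> perms d"
      using Suc.prems \<open>a < b\<close> by (auto intro: transpose_in_perms)
    have "P ?\<tau>" "P (Transposition.transpose a b)"
      using Suc \<open>a < b\<close> adjacent by auto
    then have "P ((?\<tau> \<circ> Transposition.transpose a b) \<circ> ?\<tau>)"
      using perms by (intro comp perms_comp)
    then show ?thesis
      by (simp only: swap)
  qed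
qed simp

lemma perms_induct_adjacent [consumes 1, case_names id adjacent comp]:
  assumes "\<sigma> \<in> perms d"
    and "P id"
    and adjacent: "\<And>k. Suc k < d \<Longrightarrow> P (Transposition.transpose k (Suc k))"
    and comp: "\<And>\<sigma> \<tau>. \<sigma> \<in> perms d \<Longrightarrow> \<tau> \<in> perms d \<Longrightarrow> P \<sigma> \<Longrightarrow> P \<tau> \<Longrightarrow> P (\<sigma> \<circ> \<tau>)"
  shows "P \<sigma>"
proof -
  from assms(1) have "\<sigma> permutes {..<d}"
    by (simp add: perms_def)
  then show ?thesis
    using finite_lessThan[of d]
  proof (induction rule: permutes_induct)
    case id
    show ?case by (rule assms(2))
  next
    case (swap a b p)
    then have "P (Transposition.transpose a b)"
      using transpose_in_adjacent_closure[where d=d and P=P, OF adjacent comp, of a b]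
        transpose_in_adjacent_closure[where d=d and P=P, OF adjacent comp, of b a]
      by (cases "a < b") (auto simp: transpose_commute)
    with swap show ?case
      by (intro comp) (auto simp: perms_def permutes_swap_id)
  qed
qed

lemma length_perm_tuple [simp]: "length (perm_tuple \<sigma> L) = length L"
  by (simp add: perm_tuple_def)

lemma nth_perm_tuple [simp]: "m < length L \<Longrightarrow> perm_tuple \<sigma> L ! m = L ! \<sigma> m"
  by (simp add: perm_tuple_def)

lemma perm_tuple_id [simp]: "perm_tuple id L = L"
  by (rule nth_equalityI) auto

lemma perm_tuple_comp:
  "\<tau> \<in> perms (length L) \<Longrightarrow> perm_tuple \<tau> (perm_tuple \<sigma> L) = perm_tuple (\<sigma> \<circ> \<tau>) L"
  by (rule nth_equalityI) (auto simp: perms_less)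

lemma set_perm_tuple:
  assumes "\<sigma> \<in> perms (length L)"
  shows "set (perm_tuple \<sigma> L) = set L"
proof -
  have "set (perm_tuple \<sigma> L) = (!) L ` \<sigma> ` {..<length L}"
    by (auto simp: perm_tuple_def)
  also have "\<sigma> ` {..<length L} = {..<length L}"
    using assms by (simp add: perms_def permutes_image)
  finally show ?thesis
    by (auto simp: in_set_conv_nth)
qed

lemma distinct_perm_tuple_iff: "\<sigma> \<in> perms (length L) \<Longrightarrow> distinct (perm_tuple \<sigma> L) \<longleftrightarrow> distinct L"
  using set_perm_tuple by (metis card_distinct distinct_card length_perm_tuple)

lemma perm_tuple_transpose_fixes_nondistinct:
  assumes "\<not> distinct L"
  obtains a b where "a < length L" "b < length L" "a \<noteq> b"
    and "perm_tuple (Transposition.transpose a b) L = L"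
proof -
  obtain a b where ab: "a < length L" "b < length L" "a \<noteq> b" "L ! a = L ! b"
    using assms by (auto simp: distinct_conv_nth)
  moreover have "perm_tuple (Transposition.transpose a b) L = L"
    by (rule nth_equalityI) (auto simp: ab transpose_def)
  ultimately show ?thesis using that by blast
qed

lemma perm_tuple_exists:
  assumes "distinct L" "distinct K" "set K = set L"
  obtains \<sigma> where "\<sigma> \<in> perms (length L)" "perm_tuple \<sigma> K = L"
proof -
  let ?d = "length L"
  have "length K = ?d"
    using assms distinct_card by metis
  then have bij_K: "bij_betw ((!) K) {..<?d} (set L)"
    using assms by (metis bij_betw_nth lessThan_atLeast0)
  define f where "f = inv_into {..<?d} ((!) K)"
  define \<sigma> where "\<sigma> k = (if k < ?d then f (L ! k) else k)" for k
  have bij_L: "bij_betw ((!) L) {..<?d} (set L)"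
    using assms by (simp add: bij_betw_nth lessThan_atLeast0)
  have "bij_betw (f \<circ> (!) L) {..<?d} {..<?d}"
    unfolding f_def using bij_L bij_betw_inv_into[OF bij_K] by (rule bij_betw_trans)
  then have "bij_betw \<sigma> {..<?d} {..<?d}"
    by (rule bij_betw_cong[THEN iffD1, rotated]) (simp add: \<sigma>_def)
  then have "\<sigma> permutes {..<?d}"
    by (rule bij_imp_permutes) (simp add: \<sigma>_def)
  then have "\<sigma> \<in> perms ?d"
    by (simp add: perms_def)
  moreover have "perm_tuple \<sigma> K = L"
  proof (rule nth_equalityI)
    fix k assume "k < length (perm_tuple \<sigma> K)"
    then have "k < ?d" "L ! k \<in> (!) K ` {..<?d}"
      using \<open>length K = ?d\<close> bij_K by (auto simp: bij_betw_def)
    then show "perm_tuple \<sigma> K ! k = L ! k"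
      using \<open>length K = ?d\<close> by (simp add: \<sigma>_def f_def f_inv_into_f)
  qed (simp add: \<open>length K = ?d\<close>)
  ultimately show ?thesis using that by blast
qed

lemma perm_tuple_inj:
  assumes "distinct K" "\<sigma> \<in> perms (length K)" "\<tau> \<in> perms (length K)"
    and "perm_tuple \<sigma> K = perm_tuple \<tau> K"
  shows "\<sigma> = \<tau>"
proof
  fix k
  show "\<sigma> k = \<tau> k"
  proof (cases "k < length K")
    case True
    then have "K ! \<sigma> k = K ! \<tau> k"
      using arg_cong[OF assms(4), of "\<lambda>L. L ! k"] by simp
    then show ?thesis
      using True assms(1-3) nth_eq_iff_index_eq perms_less by metis
  next
    case False
    then show ?thesis
      using assms(2,3) by (metis lessThan_iff mem_Collect_eq perms_def permutes_not_in)
  qed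
qed

lemma finite_valid_tuples: "finite {L. valid_tuple n d L}"
  using finite_lists_length_eq[of "{1..n}" d] by (simp add: valid_tuple_def conj_commute)

lemma finite_incr_tuples: "finite (incr_tuples n d)"
  by (rule finite_subset[OF _ finite_valid_tuples[of n d]]) (auto simp: incr_tuples_def valid_tuple_def)

lemma incr_tuples_valid: "K \<in> incr_tuples n d \<Longrightarrow> valid_tuple n d K"
  by (simp add: incr_tuples_def valid_tuple_def)

lemma incr_tuples_distinct: "K \<in> incr_tuples n d \<Longrightarrow> distinct K"
  by (auto simp: incr_tuples_def strict_sorted_iff)

lemma bij_betw_perm_tuple_incr_tuples:
  "bij_betw (\<lambda>(K, \<sigma>). perm_tuple \<sigma> K) (incr_tuples n d \<times> perms d) {L. valid_tuple n d L \<and> distinct L}"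
proof (rule bij_betw_imageI)
  show "inj_on (\<lambda>(K, \<sigma>). perm_tuple \<sigma> K) (incr_tuples n d \<times> perms d)"
  proof (rule inj_onI, clarify)
    fix K \<sigma> K' \<sigma>'
    assume K: "K \<in> incr_tuples n d" "\<sigma> \<in> perms d" and K': "K' \<in> incr_tuples n d" "\<sigma>' \<in> perms d"
      and eq: "perm_tuple \<sigma> K = perm_tuple \<sigma>' K'"
    have "length K = d" "length K' = d"
      using K K' by (auto simp: incr_tuples_def)
    then have "set K = set K'"
      using set_perm_tuple K K' eq by metis
    then have "K = K'"
      using K K' by (intro strict_sorted_equal) (auto simp: incr_tuples_def)
    moreover have "\<sigma> = \<sigma>'"
      using perm_tuple_inj[OF incr_tuples_distinct[OF K(1)]] K K' eq \<open>length K = d\<close> \<open>K = K'\<close>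
      by simp
    ultimately show "K = K' \<and> \<sigma> = \<sigma>'" ..
  qed
  show "(\<lambda>(K, \<sigma>). perm_tuple \<sigma> K) ` (incr_tuples n d \<times> perms d) = {L. valid_tuple n d L \<and> distinct L}"
  proof (intro equalityI subsetI)
    fix L assume "L \<in> (\<lambda>(K, \<sigma>). perm_tuple \<sigma> K) ` (incr_tuples n d \<times> perms d)"
    then obtain K \<sigma> where "K \<in> incr_tuples n d" "\<sigma> \<in> perms d" "L = perm_tuple \<sigma> K"
      by auto
    then show "L \<in> {L. valid_tuple n d L \<and> distinct L}"
      using set_perm_tuple[of \<sigma> K] distinct_perm_tuple_iff[of \<sigma> K] incr_tuples_distinct
      by (auto simp: incr_tuples_def valid_tuple_def)
  next
    fix L assume L: "L \<in> {L. valid_tuple n d L \<and> distinct L}"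
    define K where "K = sorted_list_of_set (set L)"
    have K: "K \<in> incr_tuples n d" "set K = set L" "distinct K"
      using L distinct_card[of L] by (auto simp: K_def incr_tuples_def valid_tuple_def)
    obtain \<sigma> where "\<sigma> \<in> perms (length L)" "perm_tuple \<sigma> K = L"
      using perm_tuple_exists[of L K] L K by auto
    then show "L \<in> (\<lambda>(K, \<sigma>). perm_tuple \<sigma> K) ` (incr_tuples n d \<times> perms d)"
      using K L by (intro image_eqI[of _ _ "(K, \<sigma>)"]) (auto simp: valid_tuple_def)
  qed
qed

section \<open>Antisymmetry of quantum minors in the column indices\<close>

definition minor_factor :: "nat list \<Rightarrow> nat list \<Rightarrow> (nat \<Rightarrow> nat) \<Rightarrow> nat \<Rightarrow> FA fps" where
  "minor_factor J L \<sigma> m = tseries (J ! \<sigma> m) (L ! m) (- of_nat m)"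

definition minor_term :: "nat list \<Rightarrow> nat list \<Rightarrow> (nat \<Rightarrow> nat) \<Rightarrow> FA fps" where
  "minor_term J L \<sigma> = (\<Prod>m\<leftarrow>[0..<length L]. minor_factor J L \<sigma> m)"

lemma foldr_ser_mult_eq_prod_list:
  "foldr (\<lambda>k acc. ser_mult (f k) acc) ks ser_one s = (\<Prod>k\<leftarrow>ks. Abs_fps (f k)) $ s"
  by (induction ks arbitrary: s) (simp_all add: ser_one_def ser_mult_def fps_mult_nth)

lemma tminor_conv_minor_term:
  "tminor J L s = (\<Sum>\<sigma>\<in>perms (length L). smult (of_int (sign \<sigma>)) (minor_term J L \<sigma> $ s))"
  by (simp add: tminor_def perms_def minor_term_def minor_factor_def foldr_ser_mult_eq_prod_list
      tseries_def)

lemma minor_term_split: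
  assumes "Suc k < length L"
  shows "minor_term J L \<sigma> = (\<Prod>m\<leftarrow>[0..<k]. minor_factor J L \<sigma> m)
      * (minor_factor J L \<sigma> k * minor_factor J L \<sigma> (Suc k))
      * (\<Prod>m\<leftarrow>[Suc (Suc k)..<length L]. minor_factor J L \<sigma> m)"
proof -
  have "[0..<length L] = [0..<k] @ k # Suc k # [Suc (Suc k)..<length L]"
    using assms upt_add_eq_append[of 0 k "length L - k"] by (simp add: upt_conv_Cons)
  then show ?thesis
    by (simp add: minor_term_def mult.assoc)
qed

text \<open>The sum of the commutator relations for the column pairs (j, l) and (l, j): the
  commutators cancel.\<close>

lemma tseries_relation_symmetrised:
  assumes "i \<in> {1..n}" "i' \<in> {1..n}" "j \<in> {1..n}" "l \<in> {1..n}" and "a = b + 1"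
  shows "fps_in_yideal n (tseries i l a * tseries i' j b + tseries i j a * tseries i' l b
                          - tseries i' l a * tseries i j b - tseries i' j a * tseries i l b)"
proof -
  have "fps_in_yideal n
      ((tseries i j a * tseries i' l b - tseries i' l b * tseries i j a
        - tseries i' j a * tseries i l b + tseries i' j b * tseries i l a)
     + (tseries i l a * tseries i' j b - tseries i' j b * tseries i l a
        - tseries i' l a * tseries i j b + tseries i' l b * tseries i j a))"
    using assms by (intro fps_in_yideal_add tseries_commutator_relation)
  then show ?thesis
    by (simp add: algebra_simps)
qed

lemma minor_term_adjacent_swap:
  assumes k: "Suc k < length L" and J: "length J = length L" "set J \<subseteq> {1..n}"
    and L: "set L \<subseteq> {1..n}" and \<sigma>: "\<sigma> \<in> perms (length L)"
  defines "\<tau> \<equiv> Transposition.transpose k (Suc k)"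
  shows "fps_in_yideal n (minor_term J (perm_tuple \<tau> L) \<sigma> + minor_term J L \<sigma>
                          - minor_term J (perm_tuple \<tau> L) (\<sigma> \<circ> \<tau>) - minor_term J L (\<sigma> \<circ> \<tau>))"
proof -
  define A where "A = (\<Prod>m\<leftarrow>[0..<k]. minor_factor J L \<sigma> m)"
  define B where "B = (\<Prod>m\<leftarrow>[Suc (Suc k)..<length L]. minor_factor J L \<sigma> m)"
  have split: "minor_term J L' \<sigma>' = A * (minor_factor J L' \<sigma>' k * minor_factor J L' \<sigma>' (Suc k)) * B"
    if "L' \<in> {L, perm_tuple \<tau> L}" "\<sigma>' \<in> {\<sigma>, \<sigma> \<circ> \<tau>}" for L' \<sigma>'
  proof -
    have same: "minor_factor J L' \<sigma>' m = minor_factor J L \<sigma> m"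
      if "m < length L" "m \<noteq> k" "m \<noteq> Suc k" for m
      using that \<open>L' \<in> _\<close> \<open>\<sigma>' \<in> _\<close> by (auto simp: minor_factor_def \<tau>_def)
    have "(\<Prod>m\<leftarrow>[0..<k]. minor_factor J L' \<sigma>' m) = A"
      unfolding A_def using k by (intro arg_cong[where f=prod_list] map_cong) (auto simp: same)
    moreover have "(\<Prod>m\<leftarrow>[Suc (Suc k)..<length L]. minor_factor J L' \<sigma>' m) = B"
      unfolding B_def by (intro arg_cong[where f=prod_list] map_cong) (auto simp: same)
    ultimately show ?thesis
      using minor_term_split[of k L' J \<sigma>'] k that by auto
  qed
  have in_range: "J ! \<sigma> k \<in> {1..n}" "J ! \<sigma> (Suc k) \<in> {1..n}" "L ! k \<in> {1..n}" "L ! Suc k \<in> {1..n}"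
    using k J L perms_less[OF \<sigma>, of k] perms_less[OF \<sigma>, of "Suc k"]
    by (metis Suc_lessD nth_mem subsetD)+
  have "fps_in_yideal n (A * (
        tseries (J ! \<sigma> k) (L ! Suc k) (- of_nat k) * tseries (J ! \<sigma> (Suc k)) (L ! k) (- of_nat (Suc k))
      + tseries (J ! \<sigma> k) (L ! k) (- of_nat k) * tseries (J ! \<sigma> (Suc k)) (L ! Suc k) (- of_nat (Suc k))
      - tseries (J ! \<sigma> (Suc k)) (L ! Suc k) (- of_nat k) * tseries (J ! \<sigma> k) (L ! k) (- of_nat (Suc k))
      - tseries (J ! \<sigma> (Suc k)) (L ! k) (- of_nat k) * tseries (J ! \<sigma> k) (L ! Suc k) (- of_nat (Suc k)))
      * B)"
    using in_range
    by (intro fps_in_yideal_mult_left fps_in_yideal_mult_right tseries_relation_symmetrised) simp_all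
  then show ?thesis
    using k by (simp add: split minor_factor_def \<tau>_def algebra_simps)
qed

lemma tminor_adjacent_swap:
  assumes k: "Suc k < length L" and J: "length J = length L" "set J \<subseteq> {1..n}"
    and L: "set L \<subseteq> {1..n}"
  shows "tminor J (perm_tuple (Transposition.transpose k (Suc k)) L) s + tminor J L s \<in> yideal n"
proof -
  define \<tau> where "\<tau> = Transposition.transpose k (Suc k)"
  define Y where "Y \<sigma> = minor_term J (perm_tuple \<tau> L) \<sigma> + minor_term J L \<sigma>" for \<sigma>
  define X where "X = tminor J (perm_tuple \<tau> L) s + tminor J L s"
  have X: "X = (\<Sum>\<sigma>\<in>perms (length L). smult (of_int (sign \<sigma>)) (Y \<sigma> $ s))"
    by (simp add: X_def Y_def tminor_conv_minor_term sum.distrib smult_add)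
  also have "\<dots> = (\<Sum>\<sigma>\<in>perms (length L). smult (of_int (sign (\<sigma> \<circ> \<tau>))) (Y (\<sigma> \<circ> \<tau>) $ s))"
    unfolding \<tau>_def using k by (intro sum_perms_comp_transpose[symmetric]) auto
  also have "\<dots> = - (\<Sum>\<sigma>\<in>perms (length L). smult (of_int (sign \<sigma>)) (Y (\<sigma> \<circ> \<tau>) $ s))"
    unfolding \<tau>_def using k
    by (simp add: sign_perms_comp transpose_in_perms sign_swap_id smult_minus_left sum_negf)
  finally have "X + X = (\<Sum>\<sigma>\<in>perms (length L). smult (of_int (sign \<sigma>)) ((Y \<sigma> - Y (\<sigma> \<circ> \<tau>)) $ s))"
    by (subst (2) X) (simp add: smult_diff sum_subtractf)
  also have "\<dots> \<in> yideal n"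
  proof (intro yideal_sum yideal_smult)
    fix \<sigma> assume "\<sigma> \<in> perms (length L)"
    then have "fps_in_yideal n (Y \<sigma> - Y (\<sigma> \<circ> \<tau>))"
      unfolding Y_def \<tau>_def using minor_term_adjacent_swap[OF k J L] by (simp add: diff_diff_eq)
    then show "(Y \<sigma> - Y (\<sigma> \<circ> \<tau>)) $ s \<in> yideal n"
      by (simp add: fps_in_yideal_def)
  qed
  finally show ?thesis
    unfolding X_def \<tau>_def yideal_def by (rule cspan_half)
qed

lemma tminor_perm_cols:
  assumes "\<sigma> \<in> perms (length J)" "length L = length J" "set J \<subseteq> {1..n}" "set L \<subseteq> {1..n}"
  shows "tminor J (perm_tuple \<sigma> L) s - smult (of_int (sign \<sigma>)) (tminor J L s) \<in> yideal n"
  using assms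
proof (induction arbitrary: L s rule: perms_induct_adjacent)
  case id
  show ?case
    using yideal_zero by (simp only: perm_tuple_id sign_id of_int_1 smult_one diff_self)
next
  case (adjacent k)
  then have "tminor J (perm_tuple (Transposition.transpose k (Suc k)) L) s + tminor J L s \<in> yideal n"
    by (intro tminor_adjacent_swap) auto
  then show ?case
    by (simp add: sign_swap_id smult_minus_left)
next
  case (comp \<sigma> \<tau>)
  let ?L = "perm_tuple \<sigma> L"
  have L: "length ?L = length J" "set ?L \<subseteq> {1..n}"
    using comp.prems comp.hyps(1) by (simp_all add: set_perm_tuple)
  have "perm_tuple \<tau> ?L = perm_tuple (\<sigma> \<circ> \<tau>) L"
    using comp.hyps(2) comp.prems(1) by (simp add: perm_tuple_comp)
  moreover have "sign (\<sigma> \<circ> \<tau>) = sign \<tau> * sign \<sigma>"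
    using comp.hyps(1,2) by (simp add: sign_perms_comp)
  ultimately have "tminor J (perm_tuple (\<sigma> \<circ> \<tau>) L) s - smult (of_int (sign (\<sigma> \<circ> \<tau>))) (tminor J L s)
      = (tminor J (perm_tuple \<tau> ?L) s - smult (of_int (sign \<tau>)) (tminor J ?L s))
        + smult (of_int (sign \<tau>)) (tminor J ?L s - smult (of_int (sign \<sigma>)) (tminor J L s))"
    by (intro poly_mapping_eqI) (simp add: lookup_add lookup_minus algebra_simps)
  also have "\<dots> \<in> yideal n"
    using comp.IH(2)[OF L(1) comp.prems(2) L(2)] comp.IH(1)[OF comp.prems]
    by (intro yideal_add yideal_smult)
  finally show ?case .
qed

lemma tminor_nondistinct_cols:
  assumes "\<not> distinct L" "length L = length J" "set J \<subseteq> {1..n}" "set L \<subseteq> {1..n}"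
  shows "tminor J L s \<in> yideal n"
proof -
  obtain a b where "a < length L" "b < length L" "a \<noteq> b"
    and fixed: "perm_tuple (Transposition.transpose a b) L = L"
    using perm_tuple_transpose_fixes_nondistinct[OF assms(1)] .
  then have "Transposition.transpose a b \<in> perms (length J)"
    using assms(2) by (simp add: transpose_in_perms)
  from tminor_perm_cols[OF this assms(2-4), of s]
  have "tminor J L s - smult (- 1) (tminor J L s) \<in> yideal n"
    using \<open>a \<noteq> b\<close> by (simp only: fixed sign_swap_id if_False of_int_minus of_int_1)
  then show ?thesis
    unfolding yideal_def self_minus_smult_minus_one by (rule cspan_half)
qed

section \<open>Compatibility with the alternating relations\<close>

lemma calt_generator:
  "valid_tuple n d I \<Longrightarrow> \<sigma> \<in> perms d \<Longrightarrow>
    bv (perm_tuple \<sigma> I, r) - smult (of_int (sign \<sigma>)) (bv (I, r)) \<in> calt n d"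
  unfolding calt_def perms_def by (rule cspan.base) blast

lemma ker2_tens_yideal: "b \<in> yideal n \<Longrightarrow> tens x b \<in> ker2 n d"
  unfolding ker2_def by (rule cspan.base) blast

lemma rho_calt_in_ker2:
  assumes "x \<in> calt n d"
  shows "rho n d x \<in> ker2 n d"
  using assms[unfolded calt_def] unfolding rho_def ker2_def
proof (rule cspan_linear_image[OF vec_linear_lext, rotated], fold ker2_def)
  fix g :: "cbas vec"
  assume "g \<in> {bv (perm_tuple \<sigma> I, r) - smult (of_int (sign \<sigma>)) (bv (I, r)) | \<sigma> I r.
      valid_tuple n d I \<and> \<sigma> permutes {..<d}}"
  then obtain \<sigma> I r where g: "g = bv (perm_tuple \<sigma> I, r) - smult (of_int (sign \<sigma>)) (bv (I, r))"
    and I: "valid_tuple n d I" and \<sigma>: "\<sigma> \<in> perms d"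
    by (auto simp: perms_def)
  have "rho n d g = (\<Sum>J\<in>incr_tuples n d. \<Sum>a\<in>{0..r}. tens (bv (J, a))
      (tminor J (perm_tuple \<sigma> I) (r - a) - smult (of_int (sign \<sigma>)) (tminor J I (r - a))))"
    by (simp add: g rho_def rho_bas_def lext_diff lext_smult smult_sum tens_smult_right
        tens_diff_right sum_subtractf)
  also have "\<dots> \<in> ker2 n d"
    unfolding ker2_def
  proof (intro cspan_sum, fold ker2_def, intro ker2_tens_yideal tminor_perm_cols)
    fix J assume "J \<in> incr_tuples n d"
    then show "\<sigma> \<in> perms (length J)" "length I = length J" "set J \<subseteq> {1..n}" "set I \<subseteq> {1..n}"
      using I \<sigma> by (auto simp: incr_tuples_def valid_tuple_def)
  qed
  finally show "lext (rho_bas n d) g \<in> ker2 n d"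
    by (simp only: rho_def)
qed

section \<open>Ring homomorphisms applied to series\<close>

definition is_ring_hom :: "('a::ring_1 \<Rightarrow> 'b::ring_1) \<Rightarrow> bool" where
  "is_ring_hom h \<longleftrightarrow> (\<forall>x y. h (x + y) = h x + h y) \<and> (\<forall>x y. h (x * y) = h x * h y)
     \<and> h 0 = 0 \<and> h 1 = 1"

lemma is_ring_hom_sum: "is_ring_hom h \<Longrightarrow> h (sum f A) = (\<Sum>a\<in>A. h (f a))"
  by (induction A rule: infinite_finite_induct) (auto simp: is_ring_hom_def)

definition fps_map :: "('a::zero \<Rightarrow> 'b::zero) \<Rightarrow> 'a fps \<Rightarrow> 'b fps" where
  "fps_map h F = Abs_fps (\<lambda>s. h (F $ s))"

lemma fps_map_nth [simp]: "fps_map h F $ s = h (F $ s)"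
  by (simp add: fps_map_def)

lemma fps_map_mult: "is_ring_hom h \<Longrightarrow> fps_map h (F * G) = fps_map h F * fps_map h G"
  by (intro fps_ext) (simp add: fps_mult_nth is_ring_hom_sum, simp add: is_ring_hom_def)

lemma fps_map_one: "is_ring_hom h \<Longrightarrow> fps_map h 1 = 1"
  by (intro fps_ext) (simp add: is_ring_hom_def)

lemma fps_map_prod_list: "is_ring_hom h \<Longrightarrow> fps_map h (\<Prod>m\<leftarrow>xs. F m) = (\<Prod>m\<leftarrow>xs. fps_map h (F m))"
  by (induction xs) (simp_all add: fps_map_one fps_map_mult)

section \<open>The counit axiom\<close>

lemma prod_list_if_one_zero:
  "(\<Prod>m\<leftarrow>xs. if c m then 1 else 0) = (if \<forall>m\<in>set xs. c m then 1 else (0::'a::semiring_1))"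
  by (induction xs) auto

definition counit :: "FA \<Rightarrow> complex" where
  "counit x = Poly_Mapping.lookup x []"

lemma counit_smult: "counit (smult c x) = c * counit x"
  by (simp add: counit_def)

lemma counit_mult: "counit (x * y) = counit x * counit y"
proof -
  let ?S = "insert [] (Poly_Mapping.keys x)" and ?U = "insert [] (Poly_Mapping.keys y)"
  have "x * y = (\<Sum>a\<in>?S. Poly_Mapping.single a (Poly_Mapping.lookup x a))
      * (\<Sum>b\<in>?U. Poly_Mapping.single b (Poly_Mapping.lookup y b))"
    by (subst (1) poly_mapping_eq_sum_single[of ?S x], simp, blast,
        subst (1) poly_mapping_eq_sum_single[of ?U y]) auto
  also have "\<dots> = (\<Sum>a\<in>?S. \<Sum>b\<in>?U.
      Poly_Mapping.single (a @ b) (Poly_Mapping.lookup x a * Poly_Mapping.lookup y b))"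
    by (simp add: sum_distrib_left sum_distrib_right mult_single) (rule sum.swap)
  finally have "counit (x * y) = (\<Sum>a\<in>?S. \<Sum>b\<in>?U.
      if a = [] \<and> b = [] then Poly_Mapping.lookup x a * Poly_Mapping.lookup y b else 0)"
    by (simp add: counit_def lookup_sum lookup_single when_def)
  also have "\<dots> = (\<Sum>a\<in>?S. if a = [] then
      (\<Sum>b\<in>?U. if b = [] then Poly_Mapping.lookup x a * Poly_Mapping.lookup y b else 0) else 0)"
    by (intro sum.cong refl) auto
  finally show ?thesis
    by (simp add: counit_def)
qed

lemma is_ring_hom_counit: "is_ring_hom counit"
  by (simp add: is_ring_hom_def counit_def lookup_add counit_mult[unfolded counit_def] lookup_one)

lemma counit_T: "counit (T i j r) = (if r = 0 \<and> i = j then 1 else 0)"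
  by (auto simp: T_def counit_def bv_def lookup_single lookup_one)

lemma fps_map_counit_tseries: "fps_map counit (tseries i j a) = (if i = j then 1 else 0)"
proof (rule fps_ext)
  fix m
  have "counit (tser i j a m) = (\<Sum>r\<le>m. shifted_power_series a r $ m * counit (T i j r))"
    by (simp add: tser_conv_sum[of m m] is_ring_hom_sum[OF is_ring_hom_counit] counit_smult)
  also have "\<dots> = (\<Sum>r\<le>m. if r = 0 then shifted_power_series a 0 $ m * (if i = j then 1 else 0) else 0)"
    by (intro sum.cong refl) (auto simp: counit_T)
  also have "\<dots> = (if m = 0 \<and> i = j then 1 else 0)"
    by (simp add: shifted_power_series_nth gbinomial_0_left)
  finally show "fps_map counit (tseries i j a) $ m = (if i = j then 1 else 0 :: complex fps) $ m"
    by simp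
qed

lemma counit_minor_term:
  assumes "length J = length L"
  shows "counit (minor_term J L \<sigma> $ s) = (if s = 0 \<and> perm_tuple \<sigma> J = L then 1 else 0)"
proof -
  have "fps_map counit (minor_term J L \<sigma>) = (\<Prod>m\<leftarrow>[0..<length L]. if J ! \<sigma> m = L ! m then 1 else 0)"
    by (simp add: minor_term_def fps_map_prod_list[OF is_ring_hom_counit] minor_factor_def
        fps_map_counit_tseries)
  also have "\<dots> = (if \<forall>m\<in>set [0..<length L]. J ! \<sigma> m = L ! m then 1 else 0)"
    by (rule prod_list_if_one_zero)
  also have "(\<forall>m\<in>set [0..<length L]. J ! \<sigma> m = L ! m) \<longleftrightarrow> perm_tuple \<sigma> J = L"
    unfolding perm_tuple_def assms list_eq_iff_nth_eq by (simp add: atLeast0LessThan lessThan_iff Ball_def)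
  finally have "fps_map counit (minor_term J L \<sigma>) $ s = (if perm_tuple \<sigma> J = L then 1 else 0 :: complex fps) $ s"
    by (rule arg_cong)
  then show ?thesis
    by (simp split: if_split)
qed

lemma counit_tminor:
  assumes "length J = length L"
  shows "counit (tminor J L s)
       = (if s = 0 then \<Sum>\<sigma>\<in>perms (length L). if perm_tuple \<sigma> J = L then of_int (sign \<sigma>) else 0 else 0)"
  using assms
  by (simp add: tminor_conv_minor_term is_ring_hom_sum[OF is_ring_hom_counit] counit_smult
      counit_minor_term if_distrib cong: if_cong)

lemma id_eps_sum: "id_eps (sum f A) = (\<Sum>a\<in>A. id_eps (f a))"
  by (simp add: id_eps_def lext_sum)

lemma id_eps_tens_bv: "id_eps (tens (bv p) y) = smult (counit y) (bv p)"
proof -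
  have "id_eps (tens (bv p) y) = lext (\<lambda>q. if q = [] then bv p else 0) y"
    by (simp add: id_eps_def tens_bv_left lext_lext)
  also have "\<dots> = smult (counit y) (bv p)"
    by (cases "[] \<in> Poly_Mapping.keys y")
       (auto simp: lext_def counit_def if_distrib sum.delta in_keys_iff intro!: sum.neutral
         cong: if_cong)
  finally show ?thesis .
qed

lemma id_eps_rho_bas:
  assumes "length I = d"
  shows "id_eps (rho_bas n d (I, r)) = (\<Sum>(J, \<sigma>)\<in>incr_tuples n d \<times> perms d.
      if perm_tuple \<sigma> J = I then smult (of_int (sign \<sigma>)) (bv (J, r)) else 0)"
proof -
  have "id_eps (rho_bas n d (I, r))
      = (\<Sum>J\<in>incr_tuples n d. \<Sum>a\<in>{0..r}. smult (counit (tminor J I (r - a))) (bv (J, a)))"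
    by (simp add: rho_bas_def id_eps_sum id_eps_tens_bv)
  also have "\<dots> = (\<Sum>J\<in>incr_tuples n d. \<Sum>a\<in>{0..r}. if a = r then
      smult (\<Sum>\<sigma>\<in>perms d. if perm_tuple \<sigma> J = I then of_int (sign \<sigma>) else 0) (bv (J, a)) else 0)"
    using assms by (intro sum.cong refl) (auto simp: counit_tminor incr_tuples_def)
  also have "\<dots> = (\<Sum>J\<in>incr_tuples n d. \<Sum>\<sigma>\<in>perms d.
      if perm_tuple \<sigma> J = I then smult (of_int (sign \<sigma>)) (bv (J, r)) else 0)"
    by (simp add: smult_sum_left) (intro sum.cong refl, simp)
  finally show ?thesis
    by (simp add: sum.cartesian_product)
qed

lemma bv_nondistinct_in_calt:
  assumes "valid_tuple n d I" "\<not> distinct I"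
  shows "bv (I, r) \<in> calt n d"
proof -
  obtain a b where "a < length I" "b < length I" "a \<noteq> b"
    and fixed: "perm_tuple (Transposition.transpose a b) I = I"
    using perm_tuple_transpose_fixes_nondistinct[OF assms(2)] .
  then have "Transposition.transpose a b \<in> perms d"
    using assms(1) by (simp add: transpose_in_perms valid_tuple_def)
  from calt_generator[OF assms(1) this, of r]
  have "bv (I, r) - smult (- 1) (bv (I, r)) \<in> calt n d"
    using \<open>a \<noteq> b\<close> by (simp only: fixed sign_swap_id if_False of_int_minus of_int_1)
  then show ?thesis
    unfolding calt_def self_minus_smult_minus_one by (rule cspan_half)
qed

lemma id_eps_rho_bas_in_calt:
  assumes I: "valid_tuple n d I"
  shows "id_eps (rho_bas n d (I, r)) - bv (I, r) \<in> calt n d"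
proof -
  let ?g = "\<lambda>(K, \<sigma>). perm_tuple \<sigma> K"
  let ?A = "incr_tuples n d \<times> perms d"
  have bij: "bij_betw ?g ?A {L. valid_tuple n d L \<and> distinct L}"
    by (rule bij_betw_perm_tuple_incr_tuples)
  have eps: "id_eps (rho_bas n d (I, r))
      = (\<Sum>(J, \<sigma>)\<in>?A. if ?g (J, \<sigma>) = I then smult (of_int (sign \<sigma>)) (bv (J, r)) else 0)"
    using I id_eps_rho_bas[of I d n r] by (simp add: valid_tuple_def)
  show ?thesis
  proof (cases "distinct I")
    case True
    then obtain K \<sigma> where K\<sigma>: "(K, \<sigma>) \<in> ?A" "perm_tuple \<sigma> K = I"
      using I bij by (force simp: bij_betw_def)
    have "?g p = I \<longleftrightarrow> p = (K, \<sigma>)" if "p \<in> ?A" for p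
      using K\<sigma> that bij by (auto simp: bij_betw_def inj_on_def)
    then have "id_eps (rho_bas n d (I, r))
        = (\<Sum>p\<in>?A. if p = (K, \<sigma>) then smult (of_int (sign (snd p))) (bv (fst p, r)) else 0)"
      unfolding eps by (intro sum.cong refl) (auto split: prod.split)
    also have "\<dots> = smult (of_int (sign \<sigma>)) (bv (K, r))"
      using K\<sigma>(1) finite_incr_tuples by simp
    finally have "id_eps (rho_bas n d (I, r)) - bv (I, r)
        = - (bv (perm_tuple \<sigma> K, r) - smult (of_int (sign \<sigma>)) (bv (K, r)))"
      using K\<sigma>(2) by simp
    also have "\<dots> \<in> calt n d"
      using K\<sigma>(1) unfolding calt_def
      by (intro cspan_minus, fold calt_def, intro calt_generator) (auto simp: incr_tuples_valid)
    finally show ?thesis .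
  next
    case False
    have "?g p \<noteq> I" if "p \<in> ?A" for p
      using that bij False by (auto simp: bij_betw_def)
    then have "id_eps (rho_bas n d (I, r)) = 0"
      unfolding eps by (intro sum.neutral) auto
    then show ?thesis
      using bv_nondistinct_in_calt[OF I False] unfolding calt_def by (simp add: cspan_minus)
  qed
qed

lemma rho_counit_law:
  assumes "\<forall>p\<in>Poly_Mapping.keys x. valid_tuple n d (fst p)"
  shows "id_eps (rho n d x) - x \<in> calt n d"
proof -
  have "id_eps (rho n d x) - x = lext (\<lambda>p. id_eps (rho_bas n d p) - bv p) x"
    by (simp add: rho_def id_eps_def lext_lext lext_fun_diff)
  also have "\<dots> \<in> calt n d"
    unfolding calt_def
    using assms id_eps_rho_bas_in_calt[unfolded calt_def] by (intro cspan_lext) auto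
  finally show ?thesis .
qed

section \<open>Coassociativity\<close>

type_synonym FA2 = "(ygen list \<times> ygen list) vec"

lemma bv_Nil_Nil_eq_one: "bv ([], []) = (1 :: FA2)"
  using bv_zero_eq_one[where 'a="ygen list \<times> ygen list"] by (simp add: zero_prod_def)

definition coprod :: "nat \<Rightarrow> FA \<Rightarrow> FA2" where
  "coprod n = lext (delta_word n)"

lemma delta_word_conv_prod_list: "delta_word n w = (\<Prod>g\<leftarrow>w. delta_gen n g)"
  by (simp add: delta_word_def bv_Nil_Nil_eq_one prod_list.eq_foldr foldr_map o_def)

lemma is_ring_hom_coprod: "is_ring_hom (coprod n)"
  unfolding is_ring_hom_def coprod_def
  by (simp add: lext_add lext_mult delta_word_conv_prod_list one_eq_bv_Nil)

lemma coprod_smult: "coprod n (smult c x) = smult c (coprod n x)"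
  by (simp add: coprod_def lext_smult)

definition embed_left :: "FA \<Rightarrow> FA2" where
  "embed_left x = tens x 1"

definition embed_right :: "FA \<Rightarrow> FA2" where
  "embed_right y = tens 1 y"

lemma embed_left_conv_lext: "embed_left x = lext (\<lambda>p. bv (p, [])) x"
  by (simp add: embed_left_def tens_def one_eq_bv_Nil)

lemma embed_right_conv_lext: "embed_right y = lext (\<lambda>q. bv ([], q)) y"
  by (simp add: embed_right_def tens_def one_eq_bv_Nil)

lemma is_ring_hom_embed_left: "is_ring_hom embed_left"
  unfolding is_ring_hom_def embed_left_conv_lext
  by (simp add: lext_add lext_mult bv_mult one_eq_bv_Nil bv_Nil_Nil_eq_one)

lemma is_ring_hom_embed_right: "is_ring_hom embed_right"
  unfolding is_ring_hom_def embed_right_conv_lext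
  by (simp add: lext_add lext_mult bv_mult one_eq_bv_Nil bv_Nil_Nil_eq_one)

lemma embed_left_mult_embed_right: "embed_left x * embed_right y = tens x y"
  by (simp add: embed_left_conv_lext embed_right_conv_lext tens_def bv_mult lext_lext_swap[of _ y]
      flip: lext_mult_left lext_mult_right)

lemma embed_right_mult_embed_left: "embed_right y * embed_left x = tens x y"
  by (simp add: embed_left_conv_lext embed_right_conv_lext tens_def bv_mult
      flip: lext_mult_left lext_mult_right)

lemma embed_mult_nth:
  "(fps_map embed_left F * fps_map embed_right G) $ s = (\<Sum>c\<in>{0..s}. tens (F $ c) (G $ (s - c)))"
  by (simp add: fps_mult_nth embed_left_mult_embed_right)

lemma embed_right_commute_embed_left:
  "fps_map embed_right G * fps_map embed_left F = fps_map embed_left F * fps_map embed_right G"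
proof (rule fps_ext)
  fix s
  have "(fps_map embed_right G * fps_map embed_left F) $ s = (\<Sum>i\<in>{0..s}. tens (F $ (s - i)) (G $ i))"
    by (simp add: fps_mult_nth embed_right_mult_embed_left)
  also have "\<dots> = (\<Sum>i\<in>{0..s}. tens (F $ i) (G $ (s - i)))"
    by (subst sum.atLeastAtMost_rev) (intro sum.cong refl, auto)
  finally show "(fps_map embed_right G * fps_map embed_left F) $ s
      = (fps_map embed_left F * fps_map embed_right G) $ s"
    by (simp add: embed_mult_nth)
qed

lemma coprod_T:
  assumes "i \<in> {1..n}" "j \<in> {1..n}"
  shows "coprod n (T i j r) = (\<Sum>k\<in>{1..n}. \<Sum>b\<in>{0..r}. tens (T i k b) (T k j (r - b)))"
proof (cases "r = 0")
  case True
  have "(\<Sum>k\<in>{1..n}. \<Sum>b\<in>{0..r}. tens (T i k b) (T k j (r - b)))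
      = (\<Sum>k\<in>{1..n}. if k = i then (if i = j then 1 else 0) else 0)"
    using True by (intro sum.cong refl) (auto simp: T_zero one_eq_bv_Nil bv_Nil_Nil_eq_one)
  also have "\<dots> = (if i = j then 1 else 0)"
    using assms by simp
  finally show ?thesis
    using True is_ring_hom_coprod[of n] by (simp add: T_zero is_ring_hom_def)
next
  case False
  then show ?thesis
    by (simp add: T_def coprod_def delta_word_def delta_gen_def bv_Nil_Nil_eq_one)
qed

lemma tens_tser_sum:
  "(\<Sum>m=0..N. tens (tser i k a m) (tser k j b (N - m))) = (\<Sum>r\<le>N. \<Sum>s\<le>N.
      smult ((shifted_power_series a r * shifted_power_series b s) $ N) (tens (T i k r) (T k j s)))"
proof -
  have "(\<Sum>m=0..N. tens (tser i k a m) (tser k j b (N - m))) = (\<Sum>m=0..N.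
      tens (\<Sum>r\<le>N. smult (shifted_power_series a r $ m) (T i k r))
           (\<Sum>s\<le>N. smult (shifted_power_series b s $ (N - m)) (T k j s)))"
    by (intro sum.cong refl) (simp add: tser_conv_sum[of _ N])
  also have "\<dots> = (\<Sum>m=0..N. \<Sum>r\<le>N. \<Sum>s\<le>N.
      smult (shifted_power_series a r $ m * shifted_power_series b s $ (N - m)) (tens (T i k r) (T k j s)))"
    by (simp only: tens_sum_sum tens_smult_smult)
  also have "\<dots> = (\<Sum>r\<le>N. \<Sum>s\<le>N. \<Sum>m=0..N.
      smult (shifted_power_series a r $ m * shifted_power_series b s $ (N - m)) (tens (T i k r) (T k j s)))"
    by (subst sum.swap) (simp add: sum.swap[of _ "{0..N}"])
  finally show ?thesis
    by (simp add: fps_mult_nth smult_sum_left)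
qed

lemma coprod_tser:
  assumes "i \<in> {1..n}" "j \<in> {1..n}"
  shows "coprod n (tser i j a N) = (\<Sum>k\<in>{1..n}. \<Sum>m=0..N. tens (tser i k a m) (tser k j a (N - m)))"
proof -
  define g where "g k b c = smult (shifted_power_series a (b + c) $ N) (tens (T i k b) (T k j c))"
    for k b c
  have "coprod n (tser i j a N) = (\<Sum>r\<le>N. smult (shifted_power_series a r $ N)
      (\<Sum>k\<in>{1..n}. \<Sum>b\<in>{0..r}. tens (T i k b) (T k j (r - b))))"
    using assms by (simp add: tser_conv_sum[of N N] is_ring_hom_sum[OF is_ring_hom_coprod]
        coprod_smult coprod_T)
  also have "\<dots> = (\<Sum>k\<in>{1..n}. \<Sum>r\<le>N. \<Sum>b\<le>r. g k b (r - b))"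
    by (simp add: g_def smult_sum atLeast0AtMost) (rule sum.swap)
  also have "\<dots> = (\<Sum>k\<in>{1..n}. \<Sum>(b, c)\<in>{(b, c). b + c \<le> N}. g k b c)"
    by (simp add: sum.triangle_reindex_eq)
  also have "\<dots> = (\<Sum>k\<in>{1..n}. \<Sum>(b, c)\<in>{..N} \<times> {..N}. g k b c)"
    by (rule sum.cong[OF refl], rule sum.mono_neutral_left)
       (auto simp: g_def shifted_power_series_nth split: if_splits)
  also have "\<dots> = (\<Sum>k\<in>{1..n}. \<Sum>m=0..N. tens (tser i k a m) (tser k j a (N - m)))"
    by (simp add: sum.cartesian_product tens_tser_sum g_def shifted_power_series_add)
  finally show ?thesis .
qed

lemma fps_map_coprod_tseries:
  assumes "i \<in> {1..n}" "j \<in> {1..n}"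
  shows "fps_map (coprod n) (tseries i j a)
       = (\<Sum>k\<in>{1..n}. fps_map embed_left (tseries i k a) * fps_map embed_right (tseries k j a))"
  by (rule fps_ext) (simp add: fps_sum_nth embed_mult_nth coprod_tser[OF assms])

lemma prod_list_sum_distrib:
  fixes h :: "'a \<Rightarrow> 'b \<Rightarrow> 'r::semiring_1"
  assumes "finite A"
  shows "(\<Prod>m\<leftarrow>xs. \<Sum>k\<in>A. h m k)
       = (\<Sum>L\<in>{L. length L = length xs \<and> set L \<subseteq> A}. \<Prod>(m, k)\<leftarrow>zip xs L. h m k)"
proof (induction xs)
  case Nil
  have "{L. length L = 0 \<and> set L \<subseteq> A} = {[]}"
    by auto
  then show ?case by simp
next
  case (Cons x xs)
  let ?S = "{L. length L = length xs \<and> set L \<subseteq> A}"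
  have "{L. length L = length (x # xs) \<and> set L \<subseteq> A} = (\<lambda>(L, k). k # L) ` (?S \<times> A)"
    by (auto simp: length_Suc_conv)
  moreover have "inj_on (\<lambda>(L, k). k # L) (?S \<times> A)"
    by (auto simp: inj_on_def)
  ultimately have "(\<Sum>L\<in>{L. length L = length (x # xs) \<and> set L \<subseteq> A}. \<Prod>(m, k)\<leftarrow>zip (x # xs) L. h m k)
      = (\<Sum>(L, k)\<in>?S \<times> A. h x k * (\<Prod>(m, k)\<leftarrow>zip xs L. h m k))"
    by (simp add: sum.reindex case_prod_unfold)
  also have "\<dots> = (\<Sum>k\<in>A. h x k) * (\<Sum>L\<in>?S. \<Prod>(m, k)\<leftarrow>zip xs L. h m k)"
    by (simp add: sum.cartesian_product[symmetric] sum_distrib_left sum_distrib_right sum.swap[of _ ?S])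
  finally show ?case
    using Cons by simp
qed

lemma prod_list_zip_upt:
  "length L = d \<Longrightarrow> (\<Prod>(m, k)\<leftarrow>zip [0..<d] L. h m k) = (\<Prod>m\<leftarrow>[0..<d]. h m (L ! m))"
  by (subgoal_tac "zip [0..<d] L = map (\<lambda>m. (m, L ! m)) [0..<d]")
     (simp_all add: o_def, intro nth_equalityI, auto)

lemma prod_list_mult_commuting:
  fixes B C :: "'a \<Rightarrow> 'r::monoid_mult"
  assumes "\<And>m m'. C m' * B m = B m * C m'"
  shows "(\<Prod>m\<leftarrow>xs. B m * C m) = (\<Prod>m\<leftarrow>xs. B m) * (\<Prod>m\<leftarrow>xs. C m)"
proof (induction xs)
  case (Cons x xs)
  have "C x * (\<Prod>m\<leftarrow>ys. B m) = (\<Prod>m\<leftarrow>ys. B m) * C x" for ys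
    using assms by (induction ys) (simp_all, metis mult.assoc)
  then have "C x * ((\<Prod>m\<leftarrow>xs. B m) * (\<Prod>m\<leftarrow>xs. C m))
      = (\<Prod>m\<leftarrow>xs. B m) * (C x * (\<Prod>m\<leftarrow>xs. C m))"
    by (metis mult.assoc)
  with Cons show ?case
    by (simp add: mult.assoc)
qed simp

lemma fps_map_coprod_minor_term:
  assumes "length J = length I" "set J \<subseteq> {1..n}" "set I \<subseteq> {1..n}" "\<sigma> \<in> perms (length I)"
  shows "fps_map (coprod n) (minor_term J I \<sigma>) = (\<Sum>L\<in>{L. valid_tuple n (length I) L}.
      fps_map embed_left (minor_term J L \<sigma>) * fps_map embed_right (minor_term L I id))"
proof -
  let ?d = "length I"
  let ?h = "\<lambda>m k. fps_map embed_left (tseries (J ! \<sigma> m) k (- of_nat m))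
                  * fps_map embed_right (tseries k (I ! m) (- of_nat m))"
  have "fps_map (coprod n) (minor_term J I \<sigma>) = (\<Prod>m\<leftarrow>[0..<?d]. \<Sum>k\<in>{1..n}. ?h m k)"
  proof -
    have "J ! \<sigma> m \<in> {1..n}" "I ! m \<in> {1..n}" if "m < ?d" for m
      using that assms perms_less[OF assms(4) that] by (metis nth_mem subsetD)+
    then show ?thesis
      unfolding minor_term_def fps_map_prod_list[OF is_ring_hom_coprod] minor_factor_def
      by (intro arg_cong[where f=prod_list] map_cong refl fps_map_coprod_tseries) auto
  qed
  also have "\<dots> = (\<Sum>L\<in>{L. valid_tuple n ?d L}. \<Prod>m\<leftarrow>[0..<?d]. ?h m (L ! m))"
    unfolding prod_list_sum_distrib[OF finite_atLeastAtMost]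
    by (intro sum.cong) (auto simp: valid_tuple_def prod_list_zip_upt)
  also have "\<dots> = (\<Sum>L\<in>{L. valid_tuple n ?d L}.
      fps_map embed_left (minor_term J L \<sigma>) * fps_map embed_right (minor_term L I id))"
    by (intro sum.cong refl, subst prod_list_mult_commuting)
       (auto simp: embed_right_commute_embed_left minor_term_def minor_factor_def valid_tuple_def
         fps_map_prod_list is_ring_hom_embed_left is_ring_hom_embed_right)
  finally show ?thesis .
qed

lemma coprod_tminor:
  assumes "length J = length I" "set J \<subseteq> {1..n}" "set I \<subseteq> {1..n}"
  shows "coprod n (tminor J I s) = (\<Sum>L\<in>{L. valid_tuple n (length I) L}. \<Sum>c\<in>{0..s}.
      tens (tminor J L c) (minor_term L I id $ (s - c)))"
proof -
  have "coprod n (tminor J I s) = (\<Sum>\<sigma>\<in>perms (length I).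
      smult (of_int (sign \<sigma>)) (fps_map (coprod n) (minor_term J I \<sigma>) $ s))"
    by (simp add: tminor_conv_minor_term is_ring_hom_sum[OF is_ring_hom_coprod] coprod_smult)
  also have "\<dots> = (\<Sum>\<sigma>\<in>perms (length I). smult (of_int (sign \<sigma>)) (\<Sum>L\<in>{L. valid_tuple n (length I) L}.
      \<Sum>c\<in>{0..s}. tens (minor_term J L \<sigma> $ c) (minor_term L I id $ (s - c))))"
    using assms by (intro sum.cong refl) (simp add: fps_map_coprod_minor_term fps_sum_nth embed_mult_nth)
  also have "\<dots> = (\<Sum>L\<in>{L. valid_tuple n (length I) L}. \<Sum>c\<in>{0..s}.
      tens (\<Sum>\<sigma>\<in>perms (length I). smult (of_int (sign \<sigma>)) (minor_term J L \<sigma> $ c))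
        (minor_term L I id $ (s - c)))"
    by (simp add: smult_sum tens_sum_left tens_smult_left sum.swap[of _ "perms (length I)"])
  also have "\<dots> = (\<Sum>L\<in>{L. valid_tuple n (length I) L}. \<Sum>c\<in>{0..s}.
      tens (tminor J L c) (minor_term L I id $ (s - c)))"
    by (intro sum.cong refl) (simp add: tminor_conv_minor_term valid_tuple_def)
  finally show ?thesis .
qed

definition yideal_tens :: "nat \<Rightarrow> FA2 set" where
  "yideal_tens n = cspan {tens b y | b y. b \<in> yideal n}"

lemma yideal_tens_tens: "b \<in> yideal n \<Longrightarrow> tens b y \<in> yideal_tens n"
  unfolding yideal_tens_def by (rule cspan.base) blast

lemma yideal_tens_sum: "(\<And>a. a \<in> A \<Longrightarrow> f a \<in> yideal_tens n) \<Longrightarrow> sum f A \<in> yideal_tens n"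
  unfolding yideal_tens_def by (rule cspan_sum)

lemma minor_term_perm_rows:
  "length K = length I \<Longrightarrow> \<sigma> \<in> perms (length I) \<Longrightarrow> minor_term K I \<sigma> = minor_term (perm_tuple \<sigma> K) I id"
  unfolding minor_term_def minor_factor_def
  by (intro arg_cong[where f=prod_list] map_cong refl) (simp add: perms_less)

lemma sum_cols_regroup_incr:
  assumes J: "valid_tuple n d J" and I: "valid_tuple n d I"
  shows "(\<Sum>L\<in>{L. valid_tuple n d L}. tens (tminor J L c) (minor_term L I id $ m))
       - (\<Sum>K\<in>incr_tuples n d. tens (tminor J K c) (tminor K I m)) \<in> yideal_tens n"
proof -
  define F where "F L = tens (tminor J L c) (minor_term L I id $ m)" for L
  let ?D = "{L. valid_tuple n d L \<and> distinct L}" and ?N = "{L. valid_tuple n d L \<and> \<not> distinct L}"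
  have split: "(\<Sum>L\<in>{L. valid_tuple n d L}. F L) = sum F ?D + sum F ?N"
    using finite_valid_tuples[of n d]
    by (subst sum.union_disjoint[symmetric]) (auto intro: finite_subset intro!: sum.cong)
  have nondistinct: "sum F ?N \<in> yideal_tens n"
    using J unfolding F_def
    by (intro yideal_tens_sum yideal_tens_tens tminor_nondistinct_cols) (auto simp: valid_tuple_def)
  have "sum F ?D = (\<Sum>(K, \<sigma>)\<in>incr_tuples n d \<times> perms d. F (perm_tuple \<sigma> K))"
    using sum.reindex_bij_betw[OF bij_betw_perm_tuple_incr_tuples, of F] by (simp add: case_prod_unfold)
  moreover have "(\<Sum>K\<in>incr_tuples n d. tens (tminor J K c) (tminor K I m))
      = (\<Sum>(K, \<sigma>)\<in>incr_tuples n d \<times> perms d.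
          smult (of_int (sign \<sigma>)) (tens (tminor J K c) (minor_term (perm_tuple \<sigma> K) I id $ m)))"
    using I
    by (simp add: sum.cartesian_product[symmetric] tminor_conv_minor_term tens_sum_right tens_smult_right
        minor_term_perm_rows incr_tuples_def valid_tuple_def)
  ultimately have "sum F ?D - (\<Sum>K\<in>incr_tuples n d. tens (tminor J K c) (tminor K I m))
      = (\<Sum>(K, \<sigma>)\<in>incr_tuples n d \<times> perms d.
          tens (tminor J (perm_tuple \<sigma> K) c - smult (of_int (sign \<sigma>)) (tminor J K c))
               (minor_term (perm_tuple \<sigma> K) I id $ m))"
    by (simp add: F_def case_prod_unfold tens_diff_left tens_smult_left sum_subtractf)
  also have "\<dots> \<in> yideal_tens n"
  proof (intro yideal_tens_sum, clarify)
    fix K \<sigma> assume "K \<in> incr_tuples n d" "\<sigma> \<in> perms d"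
    then have "\<sigma> \<in> perms (length J)" "length K = length J" "set K \<subseteq> {1..n}"
      using J by (simp_all add: valid_tuple_def incr_tuples_def)
    then show "tens (tminor J (perm_tuple \<sigma> K) c - smult (of_int (sign \<sigma>)) (tminor J K c))
        (minor_term (perm_tuple \<sigma> K) I id $ m) \<in> yideal_tens n"
      using J by (intro yideal_tens_tens tminor_perm_cols) (simp_all add: valid_tuple_def)
  qed
  finally have "sum F ?D - (\<Sum>K\<in>incr_tuples n d. tens (tminor J K c) (tminor K I m))
      + sum F ?N \<in> yideal_tens n"
    using nondistinct unfolding yideal_tens_def by (rule cspan.add)
  then show ?thesis
    unfolding F_def[symmetric] split by (simp add: algebra_simps)
qed

lemma rho_id_sum: "rho_id n d (sum f A) = (\<Sum>a\<in>A. rho_id n d (f a))"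
  by (simp add: rho_id_def lext_sum)

lemma id_delta_sum: "id_delta n (sum f A) = (\<Sum>a\<in>A. id_delta n (f a))"
  by (simp add: id_delta_def lext_sum)

lemma lext_tens_tens_bv: "lext (\<lambda>w. tens x (tens z (bv w))) y = tens x (tens z y)"
proof -
  have "tens z y = lext (\<lambda>w. tens z (bv w)) y"
    using tens_lext_right[of z bv y] by simp
  then show ?thesis
    by (simp add: tens_lext_right)
qed

lemma rho_id_tens_bv:
  "rho_id n d (tens (bv (K, b)) y) = (\<Sum>J\<in>incr_tuples n d. \<Sum>a\<in>{0..b}.
      tens (bv (J, a)) (tens (tminor J K (b - a)) y))"
proof -
  have "rho_id n d (tens (bv (K, b)) y)
      = lext (\<lambda>w. lext (\<lambda>(q, v). bv (q, v, w)) (rho_bas n d (K, b))) y"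
    by (simp add: rho_id_def tens_bv_left lext_lext)
  also have "\<dots> = lext (\<lambda>w. \<Sum>J\<in>incr_tuples n d. \<Sum>a\<in>{0..b}.
      tens (bv (J, a)) (tens (tminor J K (b - a)) (bv w))) y"
    by (simp add: rho_bas_def lext_sum tens_def lext_lext)
  also have "\<dots> = (\<Sum>J\<in>incr_tuples n d. \<Sum>a\<in>{0..b}. tens (bv (J, a)) (tens (tminor J K (b - a)) y))"
    by (simp add: lext_fun_sum lext_tens_tens_bv)
  finally show ?thesis .
qed

lemma id_delta_tens_bv: "id_delta n (tens (bv q) y) = tens (bv q) (coprod n y)"
  by (simp add: id_delta_def coprod_def tens_bv_left lext_lext tens_lext_right case_prod_unfold)

lemma sum_triangle_swap:
  "(\<Sum>b\<in>{0..r}. \<Sum>a\<in>{0..b}. h a b) = (\<Sum>a\<in>{0..r::nat}. \<Sum>c\<in>{0..r - a}. h a (a + c))"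
proof -
  have "(\<Sum>b\<in>{0..r}. \<Sum>a\<in>{0..b}. h a b) = (\<Sum>(b, a)\<in>Sigma {0..r} (\<lambda>b. {0..b}). h a b)"
    by (simp add: sum.Sigma)
  also have "\<dots> = (\<Sum>(a, c)\<in>Sigma {0..r} (\<lambda>a. {0..r - a}). h a (a + c))"
    by (rule sum.reindex_bij_witness[where i="\<lambda>(a, c). (a + c, a)" and j="\<lambda>(b, a). (a, b - a)"]) auto
  also have "\<dots> = (\<Sum>a\<in>{0..r}. \<Sum>c\<in>{0..r - a}. h a (a + c))"
    by (simp add: sum.Sigma)
  finally show ?thesis .
qed

lemma ker3_tens_yideal_tens:
  assumes "z \<in> yideal_tens n"
  shows "tens x z \<in> ker3 n d"
  using assms unfolding yideal_tens_def ker3_def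
proof (rule cspan_linear_image[OF vec_linear_tens_right, rotated], fold ker3_def)
  fix g :: FA2
  assume "g \<in> {tens b y | b y. b \<in> yideal n}"
  then show "tens x g \<in> ker3 n d"
    unfolding ker3_def by (intro cspan.base) blast
qed

lemma rho_id_rho_bas:
  "rho_id n d (rho_bas n d (I, r)) = (\<Sum>J\<in>incr_tuples n d. \<Sum>a\<in>{0..r}. tens (bv (J, a))
      (\<Sum>c\<in>{0..r - a}. \<Sum>K\<in>incr_tuples n d. tens (tminor J K c) (tminor K I (r - a - c))))"
proof -
  have "rho_id n d (rho_bas n d (I, r)) = (\<Sum>K\<in>incr_tuples n d. \<Sum>b\<in>{0..r}.
      \<Sum>J\<in>incr_tuples n d. \<Sum>a\<in>{0..b}. tens (bv (J, a)) (tens (tminor J K (b - a)) (tminor K I (r - b))))"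
    by (simp add: rho_bas_def rho_id_sum rho_id_tens_bv)
  also have "\<dots> = (\<Sum>J\<in>incr_tuples n d. \<Sum>K\<in>incr_tuples n d. \<Sum>b\<in>{0..r}. \<Sum>a\<in>{0..b}.
      tens (bv (J, a)) (tens (tminor J K (b - a)) (tminor K I (r - b))))"
    by (subst sum.swap, rule sum.cong[OF refl], rule sum.swap)
  also have "\<dots> = (\<Sum>J\<in>incr_tuples n d. \<Sum>K\<in>incr_tuples n d. \<Sum>a\<in>{0..r}. \<Sum>c\<in>{0..r - a}.
      tens (bv (J, a)) (tens (tminor J K c) (tminor K I (r - a - c))))"
    by (simp add: sum_triangle_swap)
  also have "\<dots> = (\<Sum>J\<in>incr_tuples n d. \<Sum>a\<in>{0..r}. \<Sum>c\<in>{0..r - a}. \<Sum>K\<in>incr_tuples n d.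
      tens (bv (J, a)) (tens (tminor J K c) (tminor K I (r - a - c))))"
    by (intro sum.cong refl, subst sum.swap, intro sum.cong refl, rule sum.swap)
  finally show ?thesis
    by (simp add: tens_sum_right)
qed

lemma id_delta_rho_bas:
  assumes "valid_tuple n d I"
  shows "id_delta n (rho_bas n d (I, r)) = (\<Sum>J\<in>incr_tuples n d. \<Sum>a\<in>{0..r}. tens (bv (J, a))
      (\<Sum>c\<in>{0..r - a}. \<Sum>L\<in>{L. valid_tuple n d L}. tens (tminor J L c) (minor_term L I id $ (r - a - c))))"
proof -
  have "id_delta n (rho_bas n d (I, r))
      = (\<Sum>J\<in>incr_tuples n d. \<Sum>a\<in>{0..r}. tens (bv (J, a)) (coprod n (tminor J I (r - a))))"
    by (simp add: rho_bas_def id_delta_sum id_delta_tens_bv)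
  also have "\<dots> = (\<Sum>J\<in>incr_tuples n d. \<Sum>a\<in>{0..r}. tens (bv (J, a))
      (\<Sum>c\<in>{0..r - a}. \<Sum>L\<in>{L. valid_tuple n d L}. tens (tminor J L c) (minor_term L I id $ (r - a - c))))"
  proof (intro sum.cong refl arg_cong2[where f=tens])
    fix J a assume "J \<in> incr_tuples n d"
    then show "coprod n (tminor J I (r - a)) = (\<Sum>c\<in>{0..r - a}. \<Sum>L\<in>{L. valid_tuple n d L}.
        tens (tminor J L c) (minor_term L I id $ (r - a - c)))"
      using assms by (simp add: coprod_tminor valid_tuple_def incr_tuples_def) (rule sum.swap)
  qed
  finally show ?thesis .
qed

lemma rho_coassoc_bas:
  assumes I: "valid_tuple n d I"
  shows "rho_id n d (rho_bas n d (I, r)) - id_delta n (rho_bas n d (I, r)) \<in> ker3 n d"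
proof -
  have "rho_id n d (rho_bas n d (I, r)) - id_delta n (rho_bas n d (I, r))
      = (\<Sum>J\<in>incr_tuples n d. \<Sum>a\<in>{0..r}. tens (bv (J, a)) (- (\<Sum>c\<in>{0..r - a}.
          (\<Sum>L\<in>{L. valid_tuple n d L}. tens (tminor J L c) (minor_term L I id $ (r - a - c)))
        - (\<Sum>K\<in>incr_tuples n d. tens (tminor J K c) (tminor K I (r - a - c))))))"
    using I by (simp add: rho_id_rho_bas id_delta_rho_bas tens_diff_right tens_minus_right
        sum_subtractf flip: sum_negf)
  also have "\<dots> \<in> ker3 n d"
    unfolding ker3_def
  proof (intro cspan_sum, fold ker3_def, intro ker3_tens_yideal_tens)
    fix J a assume "J \<in> incr_tuples n d"
    then show "- (\<Sum>c\<in>{0..r - a}.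
        (\<Sum>L\<in>{L. valid_tuple n d L}. tens (tminor J L c) (minor_term L I id $ (r - a - c)))
        - (\<Sum>K\<in>incr_tuples n d. tens (tminor J K c) (tminor K I (r - a - c)))) \<in> yideal_tens n"
      unfolding yideal_tens_def using I
      by (intro cspan_minus cspan_sum, fold yideal_tens_def, intro sum_cols_regroup_incr)
         (simp_all add: incr_tuples_valid)
  qed
  finally show ?thesis .
qed

lemma rho_coassoc:
  assumes "\<forall>p\<in>Poly_Mapping.keys x. valid_tuple n d (fst p)"
  shows "rho_id n d (rho n d x) - id_delta n (rho n d x) \<in> ker3 n d"
proof -
  have "rho_id n d (rho n d x) - id_delta n (rho n d x)
      = lext (\<lambda>p. rho_id n d (rho_bas n d p) - id_delta n (rho_bas n d p)) x"
    by (simp add: rho_def rho_id_def id_delta_def lext_lext lext_fun_diff)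
  also have "\<dots> \<in> ker3 n d"
    unfolding ker3_def
    using assms rho_coassoc_bas[unfolded ker3_def] by (intro cspan_lext) auto
  finally show ?thesis .
qed

theorem mainTheorem5:
  fixes n d :: nat
  assumes "1 \<le> d" and "d \<le> n"
  shows "(\<forall>x \<in> calt n d. rho n d x \<in> ker2 n d)
       \<and> (\<forall>x. (\<forall>p \<in> Poly_Mapping.keys x. valid_tuple n d (fst p)) \<longrightarrow>
              rho_id n d (rho n d x) - id_delta n (rho n d x) \<in> ker3 n d)
       \<and> (\<forall>x. (\<forall>p \<in> Poly_Mapping.keys x. valid_tuple n d (fst p)) \<longrightarrow>
              id_eps (rho n d x) - x \<in> calt n d)"
  using rho_calt_in_ker2 rho_coassoc rho_counit_law by blast

end
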